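(* Let $\Psi$ be a well-formed declarative context and $A,B$ declarative types. If $\Psi\vdash A\le B$, then there is a context $\Delta$ such that $\Psi\vdash A<:B\dashv\Delta$.
   Context: Declarative types $A ::= 1\mid\alpha\mid\forall\alpha.A\mid A\to B$; declarative contexts $\Psi ::= \cdot\mid\Psi,\alpha\mid\Psi,x:A$. Declarative subtyping $\Psi\vdash A\le B$: least relation with $\alpha\in\Psi\Rightarrow\Psi\vdash\alpha\le\alpha$; $\Psi\vdash1\le1$; ($\Psi\vdash B_1\le A_1$, $\Psi\vdash A_2\le B_2$) $\Rightarrow\Psi\vdash A_1\to A_2\le B_1\to B_2$; ($\Psi\vdash\tau$ for a quantifier-free $\tau$ whose variables are in $\Psi$, $\Psi\vdash[\tau/\alpha]A\le B$) $\Rightarrow\Psi\vdash\forall\alpha.A\le B$; $\Psi,\beta\vdash A\le B\Rightarrow\Psi\vdash A\le\forall\beta.B$. Algorithmic types add existential variables $\hat\alpha$: $A ::= 1\mid\alpha\mid\hat\alpha\mid\forall\alpha.A\mid A\to B$; monotypes $\tau ::= 1\mid\alpha\mid\hat\alpha\mid\tau\to\tau'$. Algorithmic contexts $\Gamma ::= \cdot\mid\Gamma,\alpha\mid\Gamma,x:A\mid\Gamma,\hat\alpha\mid\Gamma,\hat\alpha=\tau\mid\Gamma,\blacktriangleright_{\hat\alpha}$, each variable declared at most once, each type/solution well-formed under the prefix to its left. $\Gamma\vdash A$: $\alpha$ declared in $\Gamma$, $\hat\alpha$ declared (solved or not), arrows componentwise, $\Gamma\vdash\forall\alpha.A$ iff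 $\Gamma,\alpha\vdash A$. $\Gamma[\Theta]$ denotes a context with $\Theta$ inside; $\Gamma[\hat\alpha][\hat\beta]$ means $\hat\alpha$ declared left of $\hat\beta$. $[\Gamma]A$ replaces each solved $\hat\alpha$ ($\hat\alpha=\tau\in\Gamma$) by $[\Gamma]\tau$, recursively. Variables introduced in premises are fresh. Algorithmic subtyping $\Gamma\vdash A<:B\dashv\Delta$: $\Gamma[\alpha]\vdash\alpha<:\alpha\dashv\Gamma[\alpha]$; $\Gamma\vdash1<:1\dashv\Gamma$; $\Gamma[\hat\alpha]\vdash\hat\alpha<:\hat\alpha\dashv\Gamma[\hat\alpha]$; ($\Gamma\vdash B_1<:A_1\dashv\Theta$, $\Theta\vdash[\Theta]A_2<:[\Theta]B_2\dashv\Delta$) $\Rightarrow\Gamma\vdash A_1\to A_2<:B_1\to B_2\dashv\Delta$; $\Gamma,\blacktriangleright_{\hat\alpha},\hat\alpha\vdash[\hat\alpha/\alpha]A<:B\dashv\Delta,\blacktriangleright_{\hat\alpha},\Theta\Rightarrow\Gamma\vdash\forall\alpha.A<:B\dashv\Delta$; $\Gamma,\alpha\vdash A<:B\dashv\Delta,\alpha,\Theta\Rightarrow\Gamma\vdash A<:\forall\alpha.B\dashv\Delta$; ($\hat\alpha\notin FV(A)$, $\Gamma[\hat\alpha]\vdash\hat\alpha:\leqq A\dashv\Delta$) $\Rightarrow\Gamma[\hat\alpha]\vdash\hat\alpha<:A\dashv\Delta$; ($\hat\alpha\notin FV(A)$, $\Gamma[\hat\alpha]\vdash A\leqq:\hat\alpha\dashv\Delta$)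 $\Rightarrow\Gamma[\hat\alpha]\vdash A<:\hat\alpha\dashv\Delta$. Instantiation $\Gamma\vdash\hat\alpha:\leqq A\dashv\Delta$: ($\Gamma\vdash\tau$) $\Rightarrow\Gamma,\hat\alpha,\Gamma'\vdash\hat\alpha:\leqq\tau\dashv\Gamma,\hat\alpha=\tau,\Gamma'$; $\Gamma[\hat\alpha][\hat\beta]\vdash\hat\alpha:\leqq\hat\beta\dashv\Gamma[\hat\alpha][\hat\beta=\hat\alpha]$; ($\Gamma[\hat\alpha_2,\hat\alpha_1,\hat\alpha=\hat\alpha_1\to\hat\alpha_2]\vdash A_1\leqq:\hat\alpha_1\dashv\Theta$, $\Theta\vdash\hat\alpha_2:\leqq[\Theta]A_2\dashv\Delta$) $\Rightarrow\Gamma[\hat\alpha]\vdash\hat\alpha:\leqq A_1\to A_2\dashv\Delta$; $\Gamma[\hat\alpha],\beta\vdash\hat\alpha:\leqq B\dashv\Delta,\beta,\Delta'\Rightarrow\Gamma[\hat\alpha]\vdash\hat\alpha:\leqq\forall\beta.B\dashv\Delta$. Instantiation $\Gamma\vdash A\leqq:\hat\alpha\dashv\Delta$: ($\Gamma\vdash\tau$) $\Rightarrow\Gamma,\hat\alpha,\Gamma'\vdash\tau\leqq:\hat\alpha\dashv\Gamma,\hat\alpha=\tau,\Gamma'$; $\Gamma[\hat\alpha][\hat\beta]\vdash\hat\beta\leqq:\hat\alpha\dashv\Gamma[\hat\alpha][\hat\beta=\hat\alpha]$; ($\Gamma[\hat\alpha_2,\hat\alpha_1,\hat\alpha=\hat\alpha_1\to\hat\alpha_2]\vdash\hat\alpha_1:\leqq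 A_1\dashv\Theta$, $\Theta\vdash[\Theta]A_2\leqq:\hat\alpha_2\dashv\Delta$) $\Rightarrow\Gamma[\hat\alpha]\vdash A_1\to A_2\leqq:\hat\alpha\dashv\Delta$; $\Gamma[\hat\alpha],\blacktriangleright_{\hat\beta},\hat\beta\vdash[\hat\beta/\beta]B\leqq:\hat\alpha\dashv\Delta,\blacktriangleright_{\hat\beta},\Delta'\Rightarrow\Gamma[\hat\alpha]\vdash\forall\beta.B\leqq:\hat\alpha\dashv\Delta$. *)

theory Defs
  imports Main
begin

text \<open>Types in locally nameless style: bound type variables are de Bruijn
indices (Bound), free universal variables are TVar, existential variables EVar.
Declarative types are those without EVar.\<close>

datatype ty = TUnit | Bound nat | TVar nat | EVar nat | All ty | Arr ty ty

fun open_k :: "nat \<Rightarrow> ty \<Rightarrow> ty \<Rightarrow> ty" where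
  "open_k k t TUnit = TUnit"
| "open_k k t (Bound i) = (if i = k then t else Bound i)"
| "open_k k t (TVar a) = TVar a"
| "open_k k t (EVar a) = EVar a"
| "open_k k t (All A) = All (open_k (Suc k) t A)"
| "open_k k t (Arr A B) = Arr (open_k k t A) (open_k k t B)"

definition open_typ :: "ty \<Rightarrow> ty \<Rightarrow> ty" where
  "open_typ A t = open_k 0 t A"

fun ftv :: "ty \<Rightarrow> nat set" where
  "ftv (TVar a) = {a}"
| "ftv (All A) = ftv A"
| "ftv (Arr A B) = ftv A \<union> ftv B"
| "ftv _ = {}"

fun fev :: "ty \<Rightarrow> nat set" where
  "fev (EVar a) = {a}"
| "fev (All A) = fev A"
| "fev (Arr A B) = fev A \<union> fev B"
| "fev _ = {}"

fun mono :: "ty \<Rightarrow> bool" where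
  "mono TUnit = True"
| "mono (Bound i) = False"
| "mono (TVar a) = True"
| "mono (EVar a) = True"
| "mono (All A) = False"
| "mono (Arr A B) = (mono A \<and> mono B)"

definition decl_typ :: "ty \<Rightarrow> bool" where
  "decl_typ A \<longleftrightarrow> fev A = {}"

fun subst_ev :: "nat \<Rightarrow> ty \<Rightarrow> ty \<Rightarrow> ty" where
  "subst_ev a t (EVar b) = (if a = b then t else EVar b)"
| "subst_ev a t (All A) = All (subst_ev a t A)"
| "subst_ev a t (Arr A B) = Arr (subst_ev a t A) (subst_ev a t B)"
| "subst_ev a t A = A"

text \<open>Context entries; contexts are lists, the rightmost element being the
most recently added one (Gamma, x  =  Gamma @ [x]).\<close>
datatype entry = CTVar nat | CVar nat ty | CEVar nat | CSolved nat ty | CMarker nat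

type_synonym ctx = "entry list"

fun tdom_e :: "entry \<Rightarrow> nat set" where
  "tdom_e (CTVar a) = {a}" | "tdom_e _ = {}"
fun vdom_e :: "entry \<Rightarrow> nat set" where
  "vdom_e (CVar x A) = {x}" | "vdom_e _ = {}"
fun edom_e :: "entry \<Rightarrow> nat set" where
  "edom_e (CEVar a) = {a}" | "edom_e (CSolved a t) = {a}" | "edom_e _ = {}"
fun mdom_e :: "entry \<Rightarrow> nat set" where
  "mdom_e (CMarker a) = {a}" | "mdom_e _ = {}"

definition tdom :: "ctx \<Rightarrow> nat set" where "tdom G = (\<Union>e\<in>set G. tdom_e e)"
definition vdom :: "ctx \<Rightarrow> nat set" where "vdom G = (\<Union>e\<in>set G. vdom_e e)"
definition edom :: "ctx \<Rightarrow> nat set" where "edom G = (\<Union>e\<in>set G. edom_e e)"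
definition mdom :: "ctx \<Rightarrow> nat set" where "mdom G = (\<Union>e\<in>set G. mdom_e e)"

text \<open>Well-formedness of types: wft_k G k A, where k counts enclosing binders.
Gamma |- A is wft G A (k = 0).\<close>
fun wft_k :: "ctx \<Rightarrow> nat \<Rightarrow> ty \<Rightarrow> bool" where
  "wft_k G k TUnit = True"
| "wft_k G k (Bound i) = (i < k)"
| "wft_k G k (TVar a) = (a \<in> tdom G)"
| "wft_k G k (EVar a) = (a \<in> edom G)"
| "wft_k G k (All A) = wft_k G (Suc k) A"
| "wft_k G k (Arr A B) = (wft_k G k A \<and> wft_k G k B)"

definition wft :: "ctx \<Rightarrow> ty \<Rightarrow> bool" where
  "wft G A = wft_k G 0 A"

inductive wf_ctx :: "ctx \<Rightarrow> bool" where
  wf_nil: "wf_ctx []"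
| wf_tvar: "wf_ctx G \<Longrightarrow> a \<notin> tdom G \<Longrightarrow> wf_ctx (G @ [CTVar a])"
| wf_var: "wf_ctx G \<Longrightarrow> x \<notin> vdom G \<Longrightarrow> wft G A \<Longrightarrow> wf_ctx (G @ [CVar x A])"
| wf_evar: "wf_ctx G \<Longrightarrow> a \<notin> edom G \<Longrightarrow> wf_ctx (G @ [CEVar a])"
| wf_solved: "wf_ctx G \<Longrightarrow> a \<notin> edom G \<Longrightarrow> mono t \<Longrightarrow> wft G t \<Longrightarrow> wf_ctx (G @ [CSolved a t])"
| wf_marker: "wf_ctx G \<Longrightarrow> a \<notin> edom G \<Longrightarrow> a \<notin> mdom G \<Longrightarrow> wf_ctx (G @ [CMarker a])"

fun decl_entry :: "entry \<Rightarrow> bool" where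
  "decl_entry (CTVar a) = True"
| "decl_entry (CVar x A) = decl_typ A"
| "decl_entry _ = False"

definition decl_ctx :: "ctx \<Rightarrow> bool" where
  "decl_ctx G \<longleftrightarrow> (\<forall>e\<in>set G. decl_entry e)"

text \<open>Applying a context as a substitution, [Gamma]A: solutions are substituted
from the right end of the context to the left, so that the solution of a variable
(which only mentions variables to its left) is itself resolved afterwards.\<close>
fun app_entry :: "entry \<Rightarrow> ty \<Rightarrow> ty" where
  "app_entry (CSolved a t) A = subst_ev a t A"
| "app_entry _ A = A"

definition applyc :: "ctx \<Rightarrow> ty \<Rightarrow> ty" where
  "applyc G A = foldr app_entry G A"

inductive decl_sub :: "ctx \<Rightarrow> ty \<Rightarrow> ty \<Rightarrow> bool" where
  dsub_var: "a \<in> tdom P \<Longrightarrow> decl_sub P (TVar a) (TVar a)"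
| dsub_unit: "decl_sub P TUnit TUnit"
| dsub_arr: "decl_sub P B1 A1 \<Longrightarrow> decl_sub P A2 B2 \<Longrightarrow> decl_sub P (Arr A1 A2) (Arr B1 B2)"
| dsub_allL: "mono t \<Longrightarrow> decl_typ t \<Longrightarrow> wft P t \<Longrightarrow> decl_sub P (open_typ A t) B
    \<Longrightarrow> decl_sub P (All A) B"
| dsub_allR: "b \<notin> tdom P \<Longrightarrow> b \<notin> ftv A \<Longrightarrow> b \<notin> ftv B
    \<Longrightarrow> decl_sub (P @ [CTVar b]) A (open_typ B (TVar b)) \<Longrightarrow> decl_sub P A (All B)"

text \<open>Instantiation: instL G a A D  is  G |- a^ :<= A -| D;
instR G A a D  is  G |- A <=: a^ -| D.  "Fresh" means not declared in the
context (existentials: neither as variable nor as marker) and not occurring in the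
types involved.\<close>
inductive instL :: "ctx \<Rightarrow> nat \<Rightarrow> ty \<Rightarrow> ctx \<Rightarrow> bool"
  and instR :: "ctx \<Rightarrow> ty \<Rightarrow> nat \<Rightarrow> ctx \<Rightarrow> bool" where
  instLSolve: "G = G0 @ [CEVar a] @ G1 \<Longrightarrow> mono t \<Longrightarrow> wft G0 t
    \<Longrightarrow> instL G a t (G0 @ [CSolved a t] @ G1)"
| instLReach: "G = G0 @ [CEVar a] @ G1 @ [CEVar b] @ G2
    \<Longrightarrow> instL G a (EVar b) (G0 @ [CEVar a] @ G1 @ [CSolved b (EVar a)] @ G2)"
| instLArr: "G = G0 @ [CEVar a] @ G1
    \<Longrightarrow> a1 \<notin> edom G \<union> mdom G \<union> fev (Arr A1 A2) \<Longrightarrow> a2 \<notin> edom G \<union> mdom G \<union> fev (Arr A1 A2)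
    \<Longrightarrow> a1 \<noteq> a2
    \<Longrightarrow> instR (G0 @ [CEVar a2, CEVar a1, CSolved a (Arr (EVar a1) (EVar a2))] @ G1) A1 a1 T
    \<Longrightarrow> instL T a2 (applyc T A2) D
    \<Longrightarrow> instL G a (Arr A1 A2) D"
| instLAllR: "CEVar a \<in> set G \<Longrightarrow> b \<notin> tdom G \<Longrightarrow> b \<notin> ftv B
    \<Longrightarrow> instL (G @ [CTVar b]) a (open_typ B (TVar b)) (D @ [CTVar b] @ D')
    \<Longrightarrow> instL G a (All B) D"
| instRSolve: "G = G0 @ [CEVar a] @ G1 \<Longrightarrow> mono t \<Longrightarrow> wft G0 t
    \<Longrightarrow> instR G t a (G0 @ [CSolved a t] @ G1)"
| instRReach: "G = G0 @ [CEVar a] @ G1 @ [CEVar b] @ G2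
    \<Longrightarrow> instR G (EVar b) a (G0 @ [CEVar a] @ G1 @ [CSolved b (EVar a)] @ G2)"
| instRArr: "G = G0 @ [CEVar a] @ G1
    \<Longrightarrow> a1 \<notin> edom G \<union> mdom G \<union> fev (Arr A1 A2) \<Longrightarrow> a2 \<notin> edom G \<union> mdom G \<union> fev (Arr A1 A2)
    \<Longrightarrow> a1 \<noteq> a2
    \<Longrightarrow> instL (G0 @ [CEVar a2, CEVar a1, CSolved a (Arr (EVar a1) (EVar a2))] @ G1) a1 A1 T
    \<Longrightarrow> instR T (applyc T A2) a2 D
    \<Longrightarrow> instR G (Arr A1 A2) a D"
| instRAllL: "CEVar a \<in> set G \<Longrightarrow> b \<notin> edom G \<union> mdom G \<union> fev B \<Longrightarrow> b \<noteq> a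
    \<Longrightarrow> instR (G @ [CMarker b, CEVar b]) (open_typ B (EVar b)) a (D @ [CMarker b] @ D')
    \<Longrightarrow> instR G (All B) a D"

inductive alg_sub :: "ctx \<Rightarrow> ty \<Rightarrow> ty \<Rightarrow> ctx \<Rightarrow> bool" where
  asub_var: "CTVar a \<in> set G \<Longrightarrow> alg_sub G (TVar a) (TVar a) G"
| asub_unit: "alg_sub G TUnit TUnit G"
| asub_evar: "CEVar a \<in> set G \<Longrightarrow> alg_sub G (EVar a) (EVar a) G"
| asub_arr: "alg_sub G B1 A1 T \<Longrightarrow> alg_sub T (applyc T A2) (applyc T B2) D
    \<Longrightarrow> alg_sub G (Arr A1 A2) (Arr B1 B2) D"
| asub_allL: "a \<notin> edom G \<union> mdom G \<union> fev A \<union> fev B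
    \<Longrightarrow> alg_sub (G @ [CMarker a, CEVar a]) (open_typ A (EVar a)) B (D @ [CMarker a] @ T)
    \<Longrightarrow> alg_sub G (All A) B D"
| asub_allR: "b \<notin> tdom G \<union> ftv A \<union> ftv B
    \<Longrightarrow> alg_sub (G @ [CTVar b]) A (open_typ B (TVar b)) (D @ [CTVar b] @ T)
    \<Longrightarrow> alg_sub G A (All B) D"
| asub_instL: "CEVar a \<in> set G \<Longrightarrow> a \<notin> fev A \<Longrightarrow> instL G a A D \<Longrightarrow> alg_sub G (EVar a) A D"
| asub_instR: "CEVar a \<in> set G \<Longrightarrow> a \<notin> fev A \<Longrightarrow> instR G A a D \<Longrightarrow> alg_sub G A (EVar a) D"

end

theory Submission
  imports Defs
begin

text \<open>It is an
induction on the declarative derivation, generalised to an arbitrary algorithmic context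
\<open>G\<close> together with a substitution \<open>\<sigma>\<close> completing its unsolved existentials by
declarative monotypes: if \<open>[\<sigma>]A \<le> [\<sigma>]B\<close>, the algorithm succeeds on \<open>A <: B\<close>, and its
output context again has a completion that agrees with \<open>\<sigma>\<close> on every type over \<open>G\<close>.
The quantifier rules are matched by choosing \<open>\<sigma>\<close> of the fresh existential to be the
declarative witness; an existential meeting an arrow type is articulated; and the occurs
checks never fire, because a monotype is not a proper subterm of a type it is related to.
Instantiation is treated by a mutual induction of the same shape, which in addition records
which existentials it may touch.\<close>

lemma edom_simps [simp]:
  "edom [] = {}" "edom (x # G) = edom_e x \<union> edom G" "edom (G @ H) = edom G \<union> edom H"
  by (auto simp: edom_def)

lemma tdom_simps [simp]:
  "tdom [] = {}" "tdom (x # G) = tdom_e x \<union> tdom G" "tdom (G @ H) = tdom G \<union> tdom H"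
  by (auto simp: tdom_def)

lemma mdom_simps [simp]:
  "mdom [] = {}" "mdom (x # G) = mdom_e x \<union> mdom G" "mdom (G @ H) = mdom G \<union> mdom H"
  by (auto simp: mdom_def)

lemma finite_fev [simp]: "finite (fev A)"
  by (induction A) auto

lemma finite_entry_doms [simp]: "finite (edom_e x)" "finite (mdom_e x)"
  by (cases x; simp)+

lemma finite_edom [simp]: "finite (edom G)"
  by (induction G) auto

lemma finite_mdom [simp]: "finite (mdom G)"
  by (induction G) auto

lemma ex_fresh_nat: "finite (S :: nat set) \<Longrightarrow> \<exists>x. x \<notin> S"
  using ex_new_if_finite infinite_UNIV_nat by blast

lemma CEVar_in_edom: "CEVar x \<in> set G \<Longrightarrow> x \<in> edom G"
  by (force simp: edom_def)

lemma CTVar_in_set_if_tdom: "c \<in> tdom G \<Longrightarrow> CTVar c \<in> set G"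
proof -
  assume "c \<in> tdom G"
  then obtain x where "x \<in> set G" "c \<in> tdom_e x" unfolding tdom_def by blast
  then show ?thesis by (cases x rule: entry.exhaust) auto
qed

fun subst_evars :: "(nat \<Rightarrow> ty) \<Rightarrow> ty \<Rightarrow> ty" where
  "subst_evars \<theta> (EVar a) = \<theta> a"
| "subst_evars \<theta> (All A) = All (subst_evars \<theta> A)"
| "subst_evars \<theta> (Arr A B) = Arr (subst_evars \<theta> A) (subst_evars \<theta> B)"
| "subst_evars \<theta> A = A"

lemma subst_ev_triv: "a \<notin> fev A \<Longrightarrow> subst_ev a t A = A"
  by (induction A) auto

lemma fev_subst_ev: "fev (subst_ev a t A) \<subseteq> (fev A - {a}) \<union> fev t"
  by (induction A) auto

lemma fev_subst_evars: "fev (subst_evars \<theta> A) = (\<Union>x\<in>fev A. fev (\<theta> x))"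
  by (induction A) auto

lemma ftv_subst_evars: "ftv A \<subseteq> ftv (subst_evars \<theta> A)"
  by (induction A) auto

lemma subst_evars_cong: "(\<And>x. x \<in> fev A \<Longrightarrow> \<theta> x = \<theta>' x) \<Longrightarrow> subst_evars \<theta> A = subst_evars \<theta>' A"
  by (induction A) auto

lemma subst_evars_subst_evars:
  "subst_evars \<theta>1 (subst_evars \<theta>2 A) = subst_evars (\<lambda>x. subst_evars \<theta>1 (\<theta>2 x)) A"
  by (induction A) auto

lemma subst_evars_subst_ev:
  "\<theta> x = subst_evars \<theta> s \<Longrightarrow> subst_evars \<theta> (subst_ev x s A) = subst_evars \<theta> A"
  by (induction A) auto

lemma subst_evars_EVar [simp]: "subst_evars EVar A = A"
  by (induction A) auto

lemma subst_evars_fun_upd_triv: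
  "x \<notin> fev A \<Longrightarrow> subst_evars (\<theta>(x := t)) A = subst_evars \<theta> A"
  by (rule subst_evars_cong) auto

lemma open_k_mono: "mono t \<Longrightarrow> open_k k u t = t"
  by (induction t) auto

lemma fev_open_k: "fev (open_k k u A) \<subseteq> fev A \<union> fev u"
  by (induction A arbitrary: k) auto

lemma subst_evars_open_k:
  "(\<And>x. x \<in> fev A \<Longrightarrow> mono (\<theta> x))
   \<Longrightarrow> subst_evars \<theta> (open_k k u A) = open_k k (subst_evars \<theta> u) (subst_evars \<theta> A)"
  by (induction A arbitrary: k) (auto simp: open_k_mono)

lemma subst_evars_eq_Arr:
  "subst_evars \<theta> B = Arr X1 X2 \<Longrightarrow>
   (\<exists>B1 B2. B = Arr B1 B2 \<and> subst_evars \<theta> B1 = X1 \<and> subst_evars \<theta> B2 = X2) \<or> (\<exists>e. B = EVar e)"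
  by (cases B) auto

lemma subst_evars_eq_All:
  "subst_evars \<theta> B = All X \<Longrightarrow> (\<exists>B'. B = All B' \<and> subst_evars \<theta> B' = X) \<or> (\<exists>e. B = EVar e)"
  by (cases B) auto

lemma applyc_Nil [simp]: "applyc [] A = A"
  by (simp add: applyc_def)

lemma applyc_Cons [simp]: "applyc (e # G) A = app_entry e (applyc G A)"
  by (simp add: applyc_def)

lemma applyc_append: "applyc (G @ H) A = applyc G (applyc H A)"
  by (simp add: applyc_def)

lemma app_entry_simps [simp]:
  "app_entry e (Arr A B) = Arr (app_entry e A) (app_entry e B)"
  "app_entry e (All A) = All (app_entry e A)" "app_entry e TUnit = TUnit"
  "app_entry e (TVar a) = TVar a" "app_entry e (Bound i) = Bound i"
  by (cases e; simp)+

lemma applyc_simps [simp]: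
  "applyc G (Arr A B) = Arr (applyc G A) (applyc G B)"
  "applyc G (All A) = All (applyc G A)" "applyc G TUnit = TUnit"
  "applyc G (TVar a) = TVar a" "applyc G (Bound i) = Bound i"
  by (induction G) auto

lemma applyc_eq_subst_evars: "applyc G A = subst_evars (\<lambda>x. applyc G (EVar x)) A"
  by (induction A) auto

lemma applyc_triv: "(\<And>x s. x \<in> fev A \<Longrightarrow> CSolved x s \<notin> set G) \<Longrightarrow> applyc G A = A"
proof (induction G)
  case (Cons e G)
  then show ?case by (cases e) (force intro: subst_ev_triv)+
qed simp

lemma applyc_triv_if_disjoint: "fev A \<inter> edom G = {} \<Longrightarrow> applyc G A = A"
  by (rule applyc_triv) (force simp: edom_def)

section \<open>Contexts completed by a substitution\<close>

fun is_evar_entry :: "entry \<Rightarrow> bool" where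
  "is_evar_entry (CEVar _) = True"
| "is_evar_entry (CSolved _ _) = True"
| "is_evar_entry _ = False"

text \<open>The substitution \<open>\<sigma>\<close> plays the role of the paper's complete context \<open>\<Omega>\<close>:
it sends every unsolved existential of \<open>G\<close> to a declarative monotype over the universal
variables to its left, and solutions only mention earlier existentials. \<open>S\<close> and \<open>T\<close>
accumulate the existential and universal variables declared so far.\<close>

fun completes_from :: "nat set \<Rightarrow> nat set \<Rightarrow> (nat \<Rightarrow> ty) \<Rightarrow> ctx \<Rightarrow> bool" where
  "completes_from S T \<sigma> [] = True"
| "completes_from S T \<sigma> (CTVar b # G) = completes_from S (insert b T) \<sigma> G"
| "completes_from S T \<sigma> (CVar x A # G) = completes_from S T \<sigma> G"
| "completes_from S T \<sigma> (CEVar a # G) = (a \<notin> S \<and> mono (\<sigma> a) \<and> fev (\<sigma> a) = {} \<and> ftv (\<sigma> a) \<subseteq> T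
     \<and> completes_from (insert a S) T \<sigma> G)"
| "completes_from S T \<sigma> (CSolved a t # G) = (a \<notin> S \<and> fev t \<subseteq> S \<and> completes_from (insert a S) T \<sigma> G)"
| "completes_from S T \<sigma> (CMarker a # G) = completes_from S T \<sigma> G"

lemma completes_from_append:
  "completes_from S T \<sigma> (G @ H) \<longleftrightarrow>
   completes_from S T \<sigma> G \<and> completes_from (S \<union> edom G) (T \<union> tdom G) \<sigma> H"
proof (induction G arbitrary: S T)
  case (Cons x G)
  then show ?case by (cases x) (auto simp: insert_commute)
qed simp

lemma completes_from_if_no_evar_entry:
  "\<forall>e\<in>set G. \<not> is_evar_entry e \<Longrightarrow> completes_from S T \<sigma> G"
proof (induction G arbitrary: S T)
  case (Cons y G)
  then show ?case by (cases y) auto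
qed simp

lemma completes_from_edom_disjoint: "completes_from S T \<sigma> G \<Longrightarrow> edom G \<inter> S = {}"
proof (induction G arbitrary: S T)
  case (Cons x G)
  then show ?case by (cases x) auto
qed simp

lemma completes_from_cong:
  "completes_from S T \<sigma> G \<Longrightarrow> (\<And>x. CEVar x \<in> set G \<Longrightarrow> \<sigma>' x = \<sigma> x) \<Longrightarrow> completes_from S T \<sigma>' G"
proof (induction G arbitrary: S T)
  case (Cons x G)
  then show ?case by (cases x) auto
qed simp

lemma completes_from_enlarge:
  "completes_from S T \<sigma> G \<Longrightarrow> S \<subseteq> S' \<Longrightarrow> (S' - S) \<inter> edom G = {} \<Longrightarrow> completes_from S' T \<sigma> G"
proof (induction G arbitrary: S S' T)
  case (Cons x G)
  show ?case
  proof (cases x)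
    case (CEVar a)
    have "completes_from (insert a S') T \<sigma> G"
      by (rule Cons.IH[of "insert a S"]) (use Cons.prems CEVar in auto)
    then show ?thesis using Cons.prems CEVar by auto
  next
    case (CSolved a t)
    have "completes_from (insert a S') T \<sigma> G"
      by (rule Cons.IH[of "insert a S"]) (use Cons.prems CSolved in auto)
    then show ?thesis using Cons.prems CSolved by auto
  next
    case (CTVar b)
    have "completes_from S' (insert b T) \<sigma> G"
      by (rule Cons.IH[of S]) (use Cons.prems CTVar in auto)
    then show ?thesis using CTVar by auto
  next
    case (CVar y A)
    have "completes_from S' T \<sigma> G"
      by (rule Cons.IH[of S]) (use Cons.prems CVar in auto)
    then show ?thesis using CVar by auto
  next
    case (CMarker b)
    have "completes_from S' T \<sigma> G"
      by (rule Cons.IH[of S]) (use Cons.prems CMarker in auto)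
    then show ?thesis using CMarker by auto
  qed
qed simp

lemma completes_from_unsolved:
  "completes_from S T \<sigma> G \<Longrightarrow> CEVar x \<in> set G \<Longrightarrow> mono (\<sigma> x) \<and> fev (\<sigma> x) = {}"
proof (induction G arbitrary: S T)
  case (Cons y G)
  then show ?case by (cases y) auto
qed simp

lemma completes_from_not_solved:
  "completes_from S T \<sigma> G \<Longrightarrow> CEVar x \<in> set G \<Longrightarrow> CSolved x s \<notin> set G"
proof (induction G arbitrary: S T)
  case (Cons y G)
  show ?case
  proof (cases y)
    case (CEVar a)
    with Cons show ?thesis
      using completes_from_edom_disjoint[of "insert a S" T \<sigma> G] by (force simp: edom_def)
  next
    case (CSolved a t)
    with Cons show ?thesis
      using completes_from_edom_disjoint[of "insert a S" T \<sigma> G] by (force simp: edom_def)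
  qed (use Cons in auto)
qed simp

lemma applyc_unsolved: "completes_from S T \<sigma> G \<Longrightarrow> CEVar x \<in> set G \<Longrightarrow> applyc G (EVar x) = EVar x"
  by (rule applyc_triv) (auto dest: completes_from_not_solved)

lemma applyc_solved:
  assumes ok: "completes_from S T \<sigma> G" and s: "CSolved x s \<in> set G"
  shows "applyc G (EVar x) = applyc G s"
proof -
  obtain G1 G2 where G: "G = G1 @ CSolved x s # G2"
    using s by (meson split_list)
  from ok have x: "x \<notin> S \<union> edom G1" and fs: "fev s \<subseteq> S \<union> edom G1"
    and ok2: "completes_from (insert x (S \<union> edom G1)) (T \<union> tdom G1) \<sigma> G2"
    by (auto simp: G completes_from_append)
  have G2: "edom G2 \<inter> insert x (S \<union> edom G1) = {}"
    using completes_from_edom_disjoint[OF ok2] .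
  have "applyc G2 (EVar x) = EVar x" "applyc G2 s = s"
    using G2 fs by (auto intro!: applyc_triv_if_disjoint)
  moreover have "subst_ev x s s = s"
    using x fs by (intro subst_ev_triv) auto
  ultimately show ?thesis
    by (simp add: G applyc_append)
qed

lemma applyc_applyc:
  assumes ok: "completes_from S T \<sigma> D" and sol: "\<And>x s. CSolved x s \<in> set G \<Longrightarrow> CSolved x s \<in> set D"
  shows "applyc D (applyc G A) = applyc D A"
  using sol
proof (induction G arbitrary: A)
  case (Cons e G)
  then have IH: "applyc D (applyc G A) = applyc D A" by auto
  show ?case
  proof (cases e)
    case (CSolved x s)
    with Cons.prems have "applyc D (EVar x) = applyc D s"
      by (intro applyc_solved[OF ok]) auto
    then have "applyc D (subst_ev x s Z) = applyc D Z" for Z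
      using subst_evars_subst_ev[of "\<lambda>y. applyc D (EVar y)" x s Z] applyc_eq_subst_evars[of D]
      by metis
    with IH CSolved show ?thesis by simp
  qed (use IH in simp_all)
qed simp

lemma fev_applyc:
  "completes_from S T \<sigma> G \<Longrightarrow> x \<in> fev (applyc G A) \<Longrightarrow>
   CEVar x \<in> set G \<or> (x \<in> fev A \<and> x \<notin> edom G) \<or> x \<in> S"
proof (induction G arbitrary: S T)
  case (Cons e G)
  show ?case
  proof (cases e)
    case (CSolved a t)
    with Cons.prems have ok: "completes_from (insert a S) T \<sigma> G" and "fev t \<subseteq> S"
      by auto
    from Cons.prems CSolved have "(x \<in> fev (applyc G A) \<and> x \<noteq> a) \<or> x \<in> fev t"
      using fev_subst_ev by fastforce
    with Cons.IH[OF ok] CSolved \<open>fev t \<subseteq> S\<close> show ?thesis by auto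
  next
    case (CEVar a)
    with Cons.prems Cons.IH[of "insert a S" T] show ?thesis by auto
  next
    case (CTVar b)
    with Cons.prems Cons.IH[of S "insert b T"] show ?thesis by auto
  qed (use Cons in auto)
qed simp

definition over_unsolved :: "ctx \<Rightarrow> ty \<Rightarrow> bool" where
  "over_unsolved G A \<longleftrightarrow> (\<forall>x\<in>fev A. CEVar x \<in> set G)"

lemma over_unsolved_applyc:
  "completes_from {} T \<sigma> G \<Longrightarrow> fev A \<subseteq> edom G \<Longrightarrow> over_unsolved G (applyc G A)"
  unfolding over_unsolved_def using fev_applyc by blast

lemma applyc_over_unsolved: "completes_from S T \<sigma> G \<Longrightarrow> over_unsolved G A \<Longrightarrow> applyc G A = A"
  unfolding over_unsolved_def by (rule applyc_triv) (auto dest: completes_from_not_solved)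

lemma over_unsolved_append: "over_unsolved G A \<Longrightarrow> over_unsolved (G @ H) A"
  unfolding over_unsolved_def by auto

lemma over_unsolved_open_typ: "over_unsolved G A \<Longrightarrow> over_unsolved G u \<Longrightarrow> over_unsolved G (open_typ A u)"
  unfolding over_unsolved_def open_typ_def using fev_open_k by blast

lemma fev_over_unsolved: "over_unsolved G A \<Longrightarrow> fev A \<subseteq> edom G"
  unfolding over_unsolved_def using CEVar_in_edom by blast

section \<open>Extension of contexts\<close>

text \<open>Inside its input, the algorithm only replaces unsolved existentials by blocks of
existential entries that still declare them: a solution, or the articulation
\<open>\<alpha>\<^sub>2, \<alpha>\<^sub>1, \<alpha> = \<alpha>\<^sub>1 \<rightarrow> \<alpha>\<^sub>2\<close>. Entries pushed at the end and dropped again are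
handled separately.\<close>

definition evar_extends :: "ctx \<Rightarrow> ctx \<Rightarrow> bool" where
  "evar_extends G D \<longleftrightarrow> (\<exists>f. D = concat (map f G) \<and> (\<forall>x. \<not> is_evar_entry x \<longrightarrow> f x = [x])
     \<and> (\<forall>x s. f (CSolved x s) = [CSolved x s])
     \<and> (\<forall>e. (\<forall>y\<in>set (f (CEVar e)). is_evar_entry y) \<and> e \<in> edom (f (CEVar e))))"

lemma evar_extends_refl: "evar_extends G G"
proof -
  have "concat (map (\<lambda>x. [x]) G) = G" by (induction G) auto
  then show ?thesis unfolding evar_extends_def by (intro exI[of _ "\<lambda>x. [x]"]) auto
qed

lemma evar_extends_trans:
  assumes "evar_extends G T" "evar_extends T D"
  shows "evar_extends G D"
proof -
  obtain f where f: "T = concat (map f G)" "\<forall>x. \<not> is_evar_entry x \<longrightarrow> f x = [x]"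
    "\<forall>x s. f (CSolved x s) = [CSolved x s]"
    "\<forall>e. (\<forall>y\<in>set (f (CEVar e)). is_evar_entry y) \<and> e \<in> edom (f (CEVar e))"
    using assms(1) unfolding evar_extends_def by blast
  obtain g where g: "D = concat (map g T)" "\<forall>x. \<not> is_evar_entry x \<longrightarrow> g x = [x]"
    "\<forall>x s. g (CSolved x s) = [CSolved x s]"
    "\<forall>e. (\<forall>y\<in>set (g (CEVar e)). is_evar_entry y) \<and> e \<in> edom (g (CEVar e))"
    using assms(2) unfolding evar_extends_def by blast
  define h where "h x = concat (map g (f x))" for x
  have "concat (map g (concat xs)) = concat (map (\<lambda>x. concat (map g x)) xs)" for xs
    by (induction xs) auto
  then have D: "D = concat (map h G)"
    unfolding g(1) f(1) h_def by (simp add: o_def)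
  have evar_block: "(\<forall>y\<in>set (h (CEVar e)). is_evar_entry y) \<and> e \<in> edom (h (CEVar e))" for e
  proof
    show "\<forall>y\<in>set (h (CEVar e)). is_evar_entry y"
    proof
      fix y assume "y \<in> set (h (CEVar e))"
      then obtain z where z: "z \<in> set (f (CEVar e))" "y \<in> set (g z)" unfolding h_def by auto
      with f(4) have "is_evar_entry z" by blast
      with z g show "is_evar_entry y" by (cases z rule: entry.exhaust) auto
    qed
  next
    obtain z where z: "z \<in> set (f (CEVar e))" "e \<in> edom_e z"
      using f(4) unfolding edom_def by blast
    with f(4) have "is_evar_entry z" by blast
    with z g(3,4) have "e \<in> edom (g z)" by (cases z rule: entry.exhaust) auto
    with z show "e \<in> edom (h (CEVar e))" unfolding h_def edom_def by auto
  qed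
  moreover have "\<forall>x. \<not> is_evar_entry x \<longrightarrow> h x = [x]" "\<forall>x s. h (CSolved x s) = [CSolved x s]"
    using f(2,3) g(2,3) unfolding h_def by auto
  ultimately show ?thesis
    unfolding evar_extends_def using D by blast
qed

lemma evar_extends_tdom: "evar_extends G D \<Longrightarrow> tdom D = tdom G"
proof -
  assume "evar_extends G D"
  then obtain f where f: "D = concat (map f G)" "\<forall>x. \<not> is_evar_entry x \<longrightarrow> f x = [x]"
    "\<forall>x s. f (CSolved x s) = [CSolved x s]" "\<forall>e. \<forall>y\<in>set (f (CEVar e)). is_evar_entry y"
    unfolding evar_extends_def by blast
  have "tdom (f x) = tdom_e x" for x
  proof (cases x)
    case (CEVar e)
    have "tdom_e y = {}" if "is_evar_entry y" for y
      using that by (cases y) auto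
    with f(4) CEVar show ?thesis by (auto simp: tdom_def)
  qed (use f(2,3) in auto)
  then show ?thesis unfolding f(1) by (simp add: tdom_def)
qed

lemma evar_extends_edom: "evar_extends G D \<Longrightarrow> edom G \<subseteq> edom D"
proof -
  assume "evar_extends G D"
  then obtain f where f: "D = concat (map f G)" "\<forall>x. \<not> is_evar_entry x \<longrightarrow> f x = [x]"
    "\<forall>x s. f (CSolved x s) = [CSolved x s]" "\<forall>e. e \<in> edom (f (CEVar e))"
    unfolding evar_extends_def by blast
  have "edom_e x \<subseteq> edom (f x)" for x
    using f(2-4) by (cases x) auto
  then show ?thesis unfolding f(1) by (force simp: edom_def)
qed

lemma evar_extends_solved: "evar_extends G D \<Longrightarrow> CSolved x s \<in> set G \<Longrightarrow> CSolved x s \<in> set D"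
proof -
  assume "evar_extends G D" "CSolved x s \<in> set G"
  then obtain f where "D = concat (map f G)" "f (CSolved x s) = [CSolved x s]"
    unfolding evar_extends_def by blast
  with \<open>CSolved x s \<in> set G\<close> show ?thesis by force
qed

lemma evar_extends_snoc:
  assumes "\<not> is_evar_entry x" "evar_extends (G @ [x]) D"
  shows "\<exists>D'. D = D' @ [x] \<and> evar_extends G D'"
proof -
  obtain f where f: "D = concat (map f (G @ [x]))" "\<forall>x. \<not> is_evar_entry x \<longrightarrow> f x = [x]"
    "\<forall>x s. f (CSolved x s) = [CSolved x s]"
    "\<forall>e. (\<forall>y\<in>set (f (CEVar e)). is_evar_entry y) \<and> e \<in> edom (f (CEVar e))"
    using assms(2) unfolding evar_extends_def by blast
  have "D = concat (map f G) @ [x]"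
    using f(1,2) assms(1) by simp
  moreover have "evar_extends G (concat (map f G))"
    unfolding evar_extends_def using f by blast
  ultimately show ?thesis by blast
qed

lemma evar_extends_snoc_marker_evar:
  assumes "evar_extends (G @ [CMarker a, CEVar a]) D"
  shows "\<exists>D' H. D = D' @ [CMarker a] @ H \<and> evar_extends G D' \<and> (\<forall>y\<in>set H. is_evar_entry y)"
proof -
  obtain f where f: "D = concat (map f (G @ [CMarker a, CEVar a]))"
    "\<forall>x. \<not> is_evar_entry x \<longrightarrow> f x = [x]" "\<forall>x s. f (CSolved x s) = [CSolved x s]"
    "\<forall>e. (\<forall>y\<in>set (f (CEVar e)). is_evar_entry y) \<and> e \<in> edom (f (CEVar e))"
    using assms unfolding evar_extends_def by blast
  have "D = concat (map f G) @ [CMarker a] @ f (CEVar a)"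
    using f(1,2) by simp
  moreover have "evar_extends G (concat (map f G))"
    unfolding evar_extends_def using f by blast
  ultimately show ?thesis using f(4) by blast
qed

lemma evar_extends_replace:
  assumes "CEVar a \<notin> set G0" "CEVar a \<notin> set G1" "\<forall>y\<in>set H. is_evar_entry y" "a \<in> edom H"
  shows "evar_extends (G0 @ CEVar a # G1) (G0 @ H @ G1)"
proof -
  define f where "f x = (if x = CEVar a then H else [x])" for x
  have "concat (map f G) = G" if "CEVar a \<notin> set G" for G
    using that by (induction G) (auto simp: f_def)
  with assms(1,2) have "G0 @ H @ G1 = concat (map f (G0 @ CEVar a # G1))"
    by (simp add: f_def)
  moreover have "\<forall>x. \<not> is_evar_entry x \<longrightarrow> f x = [x]" "\<forall>x s. f (CSolved x s) = [CSolved x s]"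
    by (auto simp: f_def)
  moreover have "(\<forall>y\<in>set (f (CEVar e)). is_evar_entry y) \<and> e \<in> edom (f (CEVar e))" for e
    using assms(3,4) by (auto simp: f_def)
  ultimately show ?thesis
    unfolding evar_extends_def by blast
qed

definition same_instance :: "ctx \<Rightarrow> (nat \<Rightarrow> ty) \<Rightarrow> ctx \<Rightarrow> (nat \<Rightarrow> ty) \<Rightarrow> bool" where
  "same_instance G \<sigma> D \<sigma>' \<longleftrightarrow>
   (\<forall>Y. fev Y \<subseteq> edom G \<longrightarrow> subst_evars \<sigma>' (applyc D Y) = subst_evars \<sigma> (applyc G Y))"

lemma same_instanceI:
  assumes okG: "completes_from {} {} \<sigma> G" and okD: "completes_from {} {} \<sigma>' D"
    and ext: "evar_extends G D"
    and unsolved: "\<And>x. CEVar x \<in> set G \<Longrightarrow> subst_evars \<sigma>' (applyc D (EVar x)) = \<sigma> x"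
  shows "same_instance G \<sigma> D \<sigma>'"
  unfolding same_instance_def
proof (intro allI impI)
  fix Y assume Y: "fev Y \<subseteq> edom G"
  define Z where "Z = applyc G Y"
  have Z: "over_unsolved G Z"
    unfolding Z_def by (rule over_unsolved_applyc[OF okG Y])
  have "applyc D Y = applyc D Z"
    unfolding Z_def by (rule applyc_applyc[OF okD, symmetric]) (use evar_extends_solved[OF ext] in blast)
  also have "\<dots> = subst_evars (\<lambda>x. applyc D (EVar x)) Z"
    by (rule applyc_eq_subst_evars)
  finally have "subst_evars \<sigma>' (applyc D Y) = subst_evars (\<lambda>x. subst_evars \<sigma>' (applyc D (EVar x))) Z"
    by (simp add: subst_evars_subst_evars)
  also have "\<dots> = subst_evars \<sigma> Z"
    using Z unsolved unfolding over_unsolved_def by (intro subst_evars_cong) auto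
  finally show "subst_evars \<sigma>' (applyc D Y) = subst_evars \<sigma> (applyc G Y)"
    unfolding Z_def .
qed

lemma same_instance_trans:
  "evar_extends G T \<Longrightarrow> same_instance G \<sigma> T \<sigma>1 \<Longrightarrow> same_instance T \<sigma>1 D \<sigma>2 \<Longrightarrow> same_instance G \<sigma> D \<sigma>2"
  unfolding same_instance_def using evar_extends_edom by (metis subset_trans)

definition completion :: "ctx \<Rightarrow> (nat \<Rightarrow> ty) \<Rightarrow> ctx \<Rightarrow> bool" where
  "completion G \<sigma> P \<longleftrightarrow> completes_from {} {} \<sigma> G \<and> tdom G = tdom P"

definition extends_completion :: "ctx \<Rightarrow> (nat \<Rightarrow> ty) \<Rightarrow> ctx \<Rightarrow> ctx \<Rightarrow> (nat \<Rightarrow> ty) \<Rightarrow> bool" where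
  "extends_completion G \<sigma> P D \<sigma>' \<longleftrightarrow> evar_extends G D \<and> completion D \<sigma>' P \<and> same_instance G \<sigma> D \<sigma>'"

lemma extends_completion_refl: "completion G \<sigma> P \<Longrightarrow> extends_completion G \<sigma> P G \<sigma>"
  unfolding extends_completion_def same_instance_def using evar_extends_refl by auto

lemma extends_completion_trans:
  "extends_completion G \<sigma> P T \<sigma>1 \<Longrightarrow> extends_completion T \<sigma>1 P D \<sigma>2 \<Longrightarrow> extends_completion G \<sigma> P D \<sigma>2"
  unfolding extends_completion_def using evar_extends_trans same_instance_trans by blast

lemma completion_if_decl_ctx: "decl_ctx P \<Longrightarrow> completion P EVar P"
proof -
  assume "decl_ctx P"
  then have "\<forall>e\<in>set P. \<not> is_evar_entry e"
    unfolding decl_ctx_def by (metis decl_entry.simps(3,4,5) is_evar_entry.elims(2))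
  then show ?thesis
    unfolding completion_def by (simp add: completes_from_if_no_evar_entry)
qed

lemma completion_unsolved_mono: "completion G \<sigma> P \<Longrightarrow> CEVar e \<in> set G \<Longrightarrow> mono (\<sigma> e)"
  unfolding completion_def using completes_from_unsolved by blast

lemma over_unsolved_subst_evars_eq_All:
  assumes "completion G \<sigma> P" "over_unsolved G B" "subst_evars \<sigma> B = All X"
  obtains B' where "B = All B'" "subst_evars \<sigma> B' = X"
proof -
  have "mono (\<sigma> e)" if "B = EVar e" for e
    using assms(1,2) that completion_unsolved_mono unfolding over_unsolved_def by auto
  with assms(3) subst_evars_eq_All[OF assms(3)] show ?thesis
    using that by fastforce
qed

lemma subst_evars_open_typ:
  "completion G \<sigma> P \<Longrightarrow> over_unsolved G A \<Longrightarrow>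
   subst_evars \<sigma> (open_typ A u) = open_typ (subst_evars \<sigma> A) (subst_evars \<sigma> u)"
  unfolding open_typ_def over_unsolved_def
  by (rule subst_evars_open_k) (use completion_unsolved_mono in blast)

lemma subst_evars_open_typ_EVar:
  assumes "completion G \<sigma> P" "over_unsolved G A" "b \<notin> fev A"
  shows "subst_evars (\<sigma>(b := t)) (open_typ A (EVar b)) = open_typ (subst_evars \<sigma> A) t"
proof -
  have "mono ((\<sigma>(b := t)) x)" if "x \<in> fev A" for x
    using that assms completion_unsolved_mono unfolding over_unsolved_def by auto
  then show ?thesis
    unfolding open_typ_def using assms(3) by (simp add: subst_evars_open_k subst_evars_fun_upd_triv)
qed

text \<open>Instantiating \<open>\<alpha>\<close> to \<open>B\<close> only touches \<open>\<alpha>\<close> and the existentials of \<open>B\<close>; this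
is what keeps \<open>\<alpha>\<^sub>2\<close> unsolved and out of \<open>[\<Theta>]A\<^sub>2\<close> in the arrow rules of
instantiation.\<close>

definition untouched :: "ctx \<Rightarrow> nat set \<Rightarrow> ctx \<Rightarrow> bool" where
  "untouched G X D \<longleftrightarrow> (\<forall>e. CEVar e \<in> set G \<longrightarrow> e \<notin> X \<longrightarrow>
     CEVar e \<in> set D \<and> (\<forall>Y. over_unsolved G Y \<longrightarrow> e \<in> fev (applyc D Y) \<longrightarrow> e \<in> fev Y))"

lemma untouched_mono:
  "untouched G X D \<Longrightarrow> (\<And>e. CEVar e \<in> set G \<Longrightarrow> e \<in> X \<Longrightarrow> e \<in> X') \<Longrightarrow> untouched G X' D"
  unfolding untouched_def by blast

lemma untouched_trans:
  assumes okT: "completes_from {} {} \<sigma> T" and okD: "completes_from {} {} \<sigma>' D"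
    and GT: "evar_extends G T" and TD: "evar_extends T D"
    and uT: "untouched G X T" and uD: "untouched T X' D"
  shows "untouched G (X \<union> X') D"
  unfolding untouched_def
proof (intro allI impI conjI)
  fix e assume e: "CEVar e \<in> set G" "e \<notin> X \<union> X'"
  with uT uD show "CEVar e \<in> set D"
    unfolding untouched_def by blast
  fix Y assume Y: "over_unsolved G Y" "e \<in> fev (applyc D Y)"
  define Y1 where "Y1 = applyc T Y"
  have Y1: "over_unsolved T Y1"
    unfolding Y1_def using over_unsolved_applyc[OF okT] fev_over_unsolved[OF Y(1)] evar_extends_edom[OF GT]
    by blast
  have "applyc D Y1 = applyc D Y"
    unfolding Y1_def by (rule applyc_applyc[OF okD]) (use evar_extends_solved[OF TD] in blast)
  with Y(2) Y1 e uT uD have "e \<in> fev Y1"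
    unfolding untouched_def by auto
  with Y(1) e uT show "e \<in> fev Y"
    unfolding untouched_def Y1_def by blast
qed

lemma untouched_truncate:
  assumes u: "untouched (G @ H) X (D @ H')" and H': "edom H' \<inter> edom G = {}"
  shows "untouched G X D"
  unfolding untouched_def
proof (intro allI impI conjI)
  fix e assume e: "CEVar e \<in> set G" "e \<notin> X"
  then have "CEVar e \<in> set (D @ H')"
    using u unfolding untouched_def by auto
  moreover have "CEVar e \<notin> set H'"
    using H' CEVar_in_edom[of e] e(1) by blast
  ultimately show "CEVar e \<in> set D" by simp
  fix Y assume Y: "over_unsolved G Y" "e \<in> fev (applyc D Y)"
  have "applyc H' Y = Y"
    using H' fev_over_unsolved[OF Y(1)] by (intro applyc_triv_if_disjoint) auto
  then have "e \<in> fev (applyc (D @ H') Y)"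
    using Y(2) by (simp add: applyc_append)
  moreover have "over_unsolved (G @ H) Y"
    using Y(1) unfolding over_unsolved_def by auto
  ultimately show "e \<in> fev Y"
    using u e unfolding untouched_def by auto
qed

lemma over_unsolved_if_untouched:
  "untouched G X D \<Longrightarrow> over_unsolved G B \<Longrightarrow> fev B \<inter> X = {} \<Longrightarrow> over_unsolved D B"
  unfolding untouched_def over_unsolved_def by blast

lemma completes_from_split:
  "completes_from {} {} \<sigma> (G0 @ CEVar a # G1) \<Longrightarrow>
   completes_from {} {} \<sigma> G0 \<and> a \<notin> edom G0 \<and> mono (\<sigma> a) \<and> fev (\<sigma> a) = {} \<and> ftv (\<sigma> a) \<subseteq> tdom G0
   \<and> completes_from (insert a (edom G0)) (tdom G0) \<sigma> G1 \<and> edom G1 \<inter> insert a (edom G0) = {}"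
  using completes_from_edom_disjoint[of "insert a (edom G0)" "tdom G0" \<sigma> G1]
  by (auto simp: completes_from_append)

lemma fev_applyc_over_unsolved:
  assumes "over_unsolved G Y" and "\<And>y. CEVar y \<in> set G \<Longrightarrow> fev (applyc D (EVar y)) \<subseteq> insert y X"
  shows "fev (applyc D Y) \<subseteq> fev Y \<union> X"
proof -
  have "fev (applyc D Y) = (\<Union>y\<in>fev Y. fev (applyc D (EVar y)))"
    by (subst applyc_eq_subst_evars) (simp add: fev_subst_evars)
  with assms show ?thesis
    unfolding over_unsolved_def by blast
qed

lemma solve_evar:
  assumes G: "completion G \<sigma> P" "G = G0 @ CEVar x # G1" and s: "fev s \<subseteq> edom G0" "over_unsolved G s"
    and eq: "subst_evars \<sigma> s = \<sigma> x"
  defines "D \<equiv> G0 @ CSolved x s # G1"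
  shows "extends_completion G \<sigma> P D \<sigma> \<and> untouched G (insert x (fev s)) D"
proof -
  have ok: "completes_from {} {} \<sigma> G" and td: "tdom G = tdom P"
    using G(1) unfolding completion_def by auto
  note split = completes_from_split[OF ok[unfolded G(2)]]
  have x: "CEVar x \<notin> set G0" "CEVar x \<notin> set G1"
    using split CEVar_in_edom by blast+
  have okD: "completes_from {} {} \<sigma> D"
    unfolding D_def using split s(1) by (auto simp: completes_from_append)
  have ext: "evar_extends G D"
    unfolding G(2) D_def using evar_extends_replace[OF x, of "[CSolved x s]"] by simp
  have unsolved: "CEVar e \<in> set D" if "CEVar e \<in> set G" "e \<noteq> x" for e
    using that unfolding G(2) D_def by auto
  have "x \<notin> fev s"
    using s(1) split by auto
  have applyD: "applyc D (EVar y) = (if y = x then s else EVar y)" if "CEVar y \<in> set G" for y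
  proof (cases "y = x")
    case True
    have "applyc D (EVar x) = applyc D s"
      by (rule applyc_solved[OF okD]) (simp add: D_def)
    also have "\<dots> = s"
      using s(2) \<open>x \<notin> fev s\<close> unsolved unfolding over_unsolved_def
      by (intro applyc_over_unsolved[OF okD]) (auto simp: over_unsolved_def)
    finally show ?thesis using True by simp
  qed (use applyc_unsolved[OF okD] unsolved that in auto)
  have "same_instance G \<sigma> D \<sigma>"
    by (rule same_instanceI[OF ok okD ext]) (use applyD eq in auto)
  then have "extends_completion G \<sigma> P D \<sigma>"
    unfolding extends_completion_def completion_def using okD ext td evar_extends_tdom[OF ext] by simp
  moreover have "fev (applyc D Y) \<subseteq> fev Y \<union> fev s" if "over_unsolved G Y" for Y
    by (rule fev_applyc_over_unsolved[OF that]) (auto simp: applyD)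
  then have "untouched G (insert x (fev s)) D"
    unfolding untouched_def using unsolved by blast
  ultimately show ?thesis ..
qed

lemma completes_from_articulate:
  assumes ok: "completes_from {} {} \<sigma> (G0 @ CEVar a # G1)" and a: "\<sigma> a = Arr t1 t2"
    and fresh: "a1 \<notin> edom (G0 @ CEVar a # G1)" "a2 \<notin> edom (G0 @ CEVar a # G1)" "a1 \<noteq> a2"
  shows "completes_from {} {} (\<sigma>(a1 := t1, a2 := t2))
    (G0 @ [CEVar a2, CEVar a1, CSolved a (Arr (EVar a1) (EVar a2))] @ G1)"
proof -
  note split = completes_from_split[OF ok]
  define \<sigma>' where "\<sigma>' = \<sigma>(a1 := t1, a2 := t2)"
  have \<sigma>': "\<sigma>' x = \<sigma> x" if "CEVar x \<in> set (G0 @ CEVar a # G1)" for x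
    using that CEVar_in_edom[OF that] fresh unfolding \<sigma>'_def by auto
  have "completes_from {} {} \<sigma>' G0"
    using completes_from_cong[of "{}" "{}" \<sigma> G0 \<sigma>'] split \<sigma>' by auto
  moreover have "completes_from (insert a (edom G0)) (tdom G0) \<sigma>' G1"
    using completes_from_cong[of _ _ \<sigma> G1 \<sigma>'] split \<sigma>' by auto
  then have "completes_from (insert a (insert a1 (insert a2 (edom G0)))) (tdom G0) \<sigma>' G1"
    by (rule completes_from_enlarge) (use fresh in auto)
  moreover have "mono t1" "mono t2" "fev t1 = {}" "fev t2 = {}" "ftv t1 \<subseteq> tdom G0" "ftv t2 \<subseteq> tdom G0"
    using split a by auto
  ultimately show ?thesis
    unfolding completes_from_append using fresh split unfolding \<sigma>'_def by (auto simp: insert_commute)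
qed

lemma articulate_evar:
  assumes G: "completion G \<sigma> P" "G = G0 @ CEVar a # G1" and a: "\<sigma> a = Arr t1 t2"
    and fresh: "a1 \<notin> edom G" "a2 \<notin> edom G" "a1 \<noteq> a2"
  defines "G' \<equiv> G0 @ [CEVar a2, CEVar a1, CSolved a (Arr (EVar a1) (EVar a2))] @ G1"
    and "\<sigma>' \<equiv> \<sigma>(a1 := t1, a2 := t2)"
  shows "extends_completion G \<sigma> P G' \<sigma>' \<and> untouched G {a} G'"
proof -
  have ok: "completes_from {} {} \<sigma> G" and td: "tdom G = tdom P"
    using G(1) unfolding completion_def by auto
  note split = completes_from_split[OF ok[unfolded G(2)]]
  have x: "CEVar a \<notin> set G0" "CEVar a \<notin> set G1"
    using split CEVar_in_edom by blast+
  have okG': "completes_from {} {} \<sigma>' G'"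
    unfolding G'_def \<sigma>'_def using completes_from_articulate[OF ok[unfolded G(2)] a] fresh G(2) by simp
  have \<sigma>': "\<sigma>' x = \<sigma> x" if "CEVar x \<in> set G" for x
    using that CEVar_in_edom[OF that] fresh unfolding \<sigma>'_def by auto
  have ext: "evar_extends G G'"
    unfolding G(2) G'_def
    using evar_extends_replace[OF x, of "[CEVar a2, CEVar a1, CSolved a (Arr (EVar a1) (EVar a2))]"] by simp
  have unsolved: "CEVar e \<in> set G'" if "CEVar e \<in> set G" "e \<noteq> a" for e
    using that unfolding G(2) G'_def by auto
  have applyG': "applyc G' (EVar y) = (if y = a then Arr (EVar a1) (EVar a2) else EVar y)"
    if "CEVar y \<in> set G" for y
  proof (cases "y = a")
    case True
    have "applyc G' (EVar a) = applyc G' (Arr (EVar a1) (EVar a2))"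
      by (rule applyc_solved[OF okG']) (simp add: G'_def)
    also have "\<dots> = Arr (EVar a1) (EVar a2)"
      using applyc_unsolved[OF okG', of a1] applyc_unsolved[OF okG', of a2] by (simp add: G'_def)
    finally show ?thesis using True by simp
  qed (use applyc_unsolved[OF okG'] unsolved that in auto)
  have "same_instance G \<sigma> G' \<sigma>'"
    by (rule same_instanceI[OF ok okG' ext]) (use applyG' a \<sigma>' fresh(3) in \<open>auto simp: \<sigma>'_def\<close>)
  then have "extends_completion G \<sigma> P G' \<sigma>'"
    unfolding extends_completion_def completion_def using okG' ext td evar_extends_tdom[OF ext] by simp
  moreover have "fev (applyc G' Y) \<subseteq> fev Y \<union> {a1, a2}" if "over_unsolved G Y" for Y
    by (rule fev_applyc_over_unsolved[OF that]) (auto simp: applyG')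
  with fresh have "untouched G {a} G'"
    unfolding untouched_def using unsolved CEVar_in_edom by blast
  ultimately show ?thesis ..
qed

lemma ftv_wft_k: "wft_k G k t \<Longrightarrow> ftv t \<subseteq> tdom G"
  by (induction t arbitrary: k) auto

lemma wft_k_if_mono: "mono t \<Longrightarrow> ftv t \<subseteq> tdom G \<Longrightarrow> fev t \<subseteq> edom G \<Longrightarrow> wft_k G k t"
  by (induction t) auto

lemma completion_push_tvar: "completion G \<sigma> P \<Longrightarrow> completion (G @ [CTVar b]) \<sigma> (P @ [CTVar b])"
  unfolding completion_def by (simp add: completes_from_append)

lemma completion_push_marker_evar:
  assumes "completion G \<sigma> P" "b \<notin> edom G" "mono t" "decl_typ t" "wft P t"
  shows "completion (G @ [CMarker b, CEVar b]) (\<sigma>(b := t)) P"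
proof -
  have "completes_from {} {} \<sigma> G"
    using assms(1) unfolding completion_def by simp
  then have "completes_from {} {} (\<sigma>(b := t)) G"
    by (rule completes_from_cong) (use assms(2) CEVar_in_edom in auto)
  moreover have "ftv t \<subseteq> tdom P"
    using assms(5) ftv_wft_k unfolding wft_def by blast
  ultimately show ?thesis
    using assms unfolding completion_def decl_typ_def by (simp add: completes_from_append)
qed

lemma extends_completion_drop_tvar:
  assumes ext: "extends_completion (G @ [CTVar b]) \<sigma> (P @ [CTVar b]) D0 \<sigma>'" and G: "completion G \<sigma> P"
  obtains D where "D0 = D @ [CTVar b]" "extends_completion G \<sigma> P D \<sigma>'"
proof -
  obtain D where D: "D0 = D @ [CTVar b]" "evar_extends G D"
    using ext evar_extends_snoc[of "CTVar b" G D0] unfolding extends_completion_def by auto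
  have "completes_from {} {} \<sigma>' D"
    using ext D(1) unfolding extends_completion_def completion_def by (simp add: completes_from_append)
  moreover have "same_instance G \<sigma> D \<sigma>'"
    using ext D(1) unfolding extends_completion_def same_instance_def by (simp add: applyc_append)
  ultimately have "extends_completion G \<sigma> P D \<sigma>'"
    using D(2) G evar_extends_tdom[OF D(2)] unfolding extends_completion_def completion_def by simp
  with D(1) that show ?thesis by blast
qed

lemma extends_completion_drop_marker_evar:
  assumes ext: "extends_completion (G @ [CMarker b, CEVar b]) (\<sigma>(b := t)) P D0 \<sigma>'"
    and G: "completion G \<sigma> P" and b: "b \<notin> edom G"
  obtains D H where "D0 = D @ [CMarker b] @ H" "edom H \<inter> edom G = {}" "extends_completion G \<sigma> P D \<sigma>'"
proof -
  have ok: "completes_from {} {} \<sigma> G"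
    using G unfolding completion_def by simp
  obtain D H where D: "D0 = D @ [CMarker b] @ H" "evar_extends G D"
    using ext evar_extends_snoc_marker_evar unfolding extends_completion_def by blast
  have okD: "completes_from {} {} \<sigma>' D" and okH: "completes_from (edom D) (tdom D) \<sigma>' H"
    using ext D(1) unfolding extends_completion_def completion_def by (simp_all add: completes_from_append)
  have H: "edom H \<inter> edom G = {}"
    using completes_from_edom_disjoint[OF okH] evar_extends_edom[OF D(2)] by blast
  have "same_instance G \<sigma> D \<sigma>'"
    unfolding same_instance_def
  proof (intro allI impI)
    fix Y assume Y: "fev Y \<subseteq> edom G"
    have "applyc H Y = Y"
      using Y H by (intro applyc_triv_if_disjoint) auto
    have "subst_evars \<sigma>' (applyc D0 Y) = subst_evars (\<sigma>(b := t)) (applyc (G @ [CMarker b, CEVar b]) Y)"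
      using ext Y unfolding extends_completion_def same_instance_def by auto
    with \<open>applyc H Y = Y\<close> have "subst_evars \<sigma>' (applyc D Y) = subst_evars (\<sigma>(b := t)) (applyc G Y)"
      by (simp add: D(1) applyc_append)
    also have "\<dots> = subst_evars \<sigma> (applyc G Y)"
      using fev_applyc[OF ok] Y b CEVar_in_edom by (intro subst_evars_fun_upd_triv) blast
    finally show "subst_evars \<sigma>' (applyc D Y) = subst_evars \<sigma> (applyc G Y)" .
  qed
  then have "extends_completion G \<sigma> P D \<sigma>'"
    using ext D okD G evar_extends_tdom[OF D(2)] unfolding extends_completion_def completion_def by simp
  with D(1) H that show ?thesis by blast
qed

lemma decl_sub_mono_eq: "decl_sub P X Y \<Longrightarrow> mono X \<Longrightarrow> mono Y \<Longrightarrow> X = Y"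
  by (induction rule: decl_sub.induct) auto

fun subterm :: "ty \<Rightarrow> ty \<Rightarrow> bool" where
  "subterm s (Arr A B) = (s = Arr A B \<or> subterm s A \<or> subterm s B)"
| "subterm s (All A) = (s = All A \<or> subterm s A)"
| "subterm s A = (s = A)"

lemma subterm_refl: "subterm s s"
  by (cases s) auto

lemma size_subterm: "subterm s A \<Longrightarrow> size s \<le> size A"
  by (induction A) auto

lemma subterm_open_k: "mono s \<Longrightarrow> subterm s A \<Longrightarrow> subterm s (open_k k u A)"
  by (induction A arbitrary: k) (auto simp: open_k_mono subterm_refl)

lemma subterm_subst_evars: "e \<in> fev A \<Longrightarrow> subterm (\<theta> e) (subst_evars \<theta> A)"
  by (induction A) (auto simp: subterm_refl)

text \<open>Instantiating quantifiers only substitutes monotypes, and monotypes are related only to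
themselves; so a monotype subterm of a super- or subtype of a monotype \<open>X\<close> is a subterm
of \<open>X\<close>. This justifies the occurs checks.\<close>

lemma decl_sub_mono_subterms:
  "decl_sub P X Y \<Longrightarrow>
   (mono X \<longrightarrow> (\<forall>s. mono s \<longrightarrow> subterm s Y \<longrightarrow> subterm s X)) \<and>
   (mono Y \<longrightarrow> (\<forall>s. mono s \<longrightarrow> subterm s X \<longrightarrow> subterm s Y))"
proof (induction rule: decl_sub.induct)
  case (dsub_arr P B1 A1 A2 B2)
  have eq: "mono (Arr A1 A2) \<Longrightarrow> mono (Arr B1 B2) \<Longrightarrow> Arr A1 A2 = Arr B1 B2"
    using decl_sub_mono_eq[OF decl_sub.dsub_arr[OF dsub_arr.hyps]] .
  show ?case
  proof (intro conjI impI allI)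
    fix s assume "mono (Arr A1 A2)" "mono s" "subterm s (Arr B1 B2)"
    with eq dsub_arr.IH show "subterm s (Arr A1 A2)"
      by (cases "s = Arr B1 B2") auto
  next
    fix s assume "mono (Arr B1 B2)" "mono s" "subterm s (Arr A1 A2)"
    with eq dsub_arr.IH show "subterm s (Arr B1 B2)"
      by (cases "s = Arr A1 A2") auto
  qed
next
  case (dsub_allL t P A B)
  then show ?case
    unfolding open_typ_def using subterm_open_k by auto
next
  case (dsub_allR b P A B)
  then show ?case
    unfolding open_typ_def using subterm_open_k by auto
qed auto

lemma mono_sub_Arr_not_subterm:
  assumes "decl_sub P X (Arr Y1 Y2)" "mono X"
  shows "\<not> subterm X Y1" "\<not> subterm X Y2"
proof -
  obtain X1 X2 where X: "X = Arr X1 X2" "decl_sub P Y1 X1" "decl_sub P X2 Y2"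
    using assms by (cases rule: decl_sub.cases) auto
  have "subterm X Y1 \<Longrightarrow> subterm X X1" "subterm X Y2 \<Longrightarrow> subterm X X2"
    using decl_sub_mono_subterms[OF X(2)] decl_sub_mono_subterms[OF X(3)] assms(2) X(1) by auto
  then show "\<not> subterm X Y1" "\<not> subterm X Y2"
    using size_subterm X(1) by fastforce+
qed

lemma Arr_sub_mono_not_subterm:
  assumes "decl_sub P (Arr Y1 Y2) X" "mono X"
  shows "\<not> subterm X Y1" "\<not> subterm X Y2"
proof -
  obtain X1 X2 where X: "X = Arr X1 X2" "decl_sub P X1 Y1" "decl_sub P Y2 X2"
    using assms by (cases rule: decl_sub.cases) auto
  have "subterm X Y1 \<Longrightarrow> subterm X X1" "subterm X Y2 \<Longrightarrow> subterm X X2"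
    using decl_sub_mono_subterms[OF X(2)] decl_sub_mono_subterms[OF X(3)] assms(2) X(1) by auto
  then show "\<not> subterm X Y1" "\<not> subterm X Y2"
    using size_subterm X(1) by fastforce+
qed

section \<open>Completeness of instantiation\<close>

lemma inst_solve:
  assumes G: "completion G \<sigma> P" "G = G0 @ CEVar a # G1" and t: "mono t" "fev t \<subseteq> edom G0"
    "over_unsolved G t" and eq: "subst_evars \<sigma> t = \<sigma> a"
  shows "\<exists>D. instL G a t D \<and> instR G t a D \<and> extends_completion G \<sigma> P D \<sigma>
    \<and> untouched G (insert a (fev t)) D"
proof -
  have "completes_from {} {} \<sigma> (G0 @ CEVar a # G1)"
    using G unfolding completion_def by simp
  then have "ftv (\<sigma> a) \<subseteq> tdom G0"
    using completes_from_split by blast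
  then have "wft G0 t"
    unfolding wft_def using ftv_subst_evars[of t \<sigma>] eq t(1,2) wft_k_if_mono by auto
  then have "instL G a t (G0 @ [CSolved a t] @ G1)" "instR G t a (G0 @ [CSolved a t] @ G1)"
    using instLSolve[of G G0 a G1 t] instRSolve[of G G0 a G1 t] G(2) t(1) by simp_all
  with solve_evar[OF G t(2,3) eq] show ?thesis
    by auto
qed

lemma inst_reach:
  assumes G: "completion G \<sigma> P" and a: "CEVar a \<in> set G" and e: "CEVar e \<in> set G" "e \<noteq> a"
    and eq: "\<sigma> e = \<sigma> a"
  shows "\<exists>D. instL G a (EVar e) D \<and> instR G (EVar e) a D \<and> extends_completion G \<sigma> P D \<sigma>
    \<and> untouched G {a, e} D"
proof -
  obtain G0 G1 where G0: "G = G0 @ CEVar a # G1"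
    using a by (meson split_list)
  show ?thesis
  proof (cases "e \<in> edom G0")
    case True
    with G e eq show ?thesis
      using inst_solve[OF G G0, of "EVar e"] by (auto simp: over_unsolved_def insert_commute)
  next
    case False
    then have "CEVar e \<in> set G1"
      using e G0 CEVar_in_edom[of e G0] by auto
    then obtain G2 G3 where G1: "G1 = G2 @ CEVar e # G3"
      by (meson split_list)
    have "G = (G0 @ CEVar a # G2) @ CEVar e # G3"
      unfolding G0 G1 by simp
    then have "extends_completion G \<sigma> P (G0 @ CEVar a # G2 @ CSolved e (EVar a) # G3) \<sigma>
      \<and> untouched G {a, e} (G0 @ CEVar a # G2 @ CSolved e (EVar a) # G3)"
      using solve_evar[OF G, of "G0 @ CEVar a # G2" e G3 "EVar a"] a eq
      by (auto simp: over_unsolved_def insert_commute)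
    moreover have "G = G0 @ [CEVar a] @ G2 @ [CEVar e] @ G3"
      unfolding G0 G1 by simp
    ultimately show ?thesis
      using instLReach instRReach by fastforce
  qed
qed

lemma inst_atom:
  assumes G: "completion G \<sigma> P" "CEVar a \<in> set G" and B: "a \<notin> fev B" "over_unsolved G B"
    "subst_evars \<sigma> B = \<sigma> a" and a: "\<sigma> a = TUnit \<or> \<sigma> a = TVar c"
  shows "\<exists>D. instL G a B D \<and> instR G B a D \<and> extends_completion G \<sigma> P D \<sigma>
    \<and> untouched G (insert a (fev B)) D"
proof (cases B)
  case (EVar e)
  with G B inst_reach[OF G, of e] show ?thesis
    unfolding over_unsolved_def by auto
next
  obtain G0 G1 where G0: "G = G0 @ CEVar a # G1"
    using G(2) by (meson split_list)
  case TUnit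
  with inst_solve[OF G(1) G0, of TUnit] B(2,3) show ?thesis by auto
next
  obtain G0 G1 where G0: "G = G0 @ CEVar a # G1"
    using G(2) by (meson split_list)
  case (TVar b)
  with inst_solve[OF G(1) G0, of "TVar b"] B(2,3) show ?thesis by auto
qed (use a B(3) in auto)

definition instL_complete :: "ctx \<Rightarrow> ty \<Rightarrow> ty \<Rightarrow> bool" where
  "instL_complete P X Y \<longleftrightarrow> (\<forall>G \<sigma> a B. completion G \<sigma> P \<longrightarrow> CEVar a \<in> set G \<longrightarrow> a \<notin> fev B
     \<longrightarrow> over_unsolved G B \<longrightarrow> \<sigma> a = X \<longrightarrow> subst_evars \<sigma> B = Y
     \<longrightarrow> (\<exists>D \<sigma>'. instL G a B D \<and> extends_completion G \<sigma> P D \<sigma>' \<and> untouched G (insert a (fev B)) D))"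

definition instR_complete :: "ctx \<Rightarrow> ty \<Rightarrow> ty \<Rightarrow> bool" where
  "instR_complete P X Y \<longleftrightarrow> (\<forall>G \<sigma> a B. completion G \<sigma> P \<longrightarrow> CEVar a \<in> set G \<longrightarrow> a \<notin> fev B
     \<longrightarrow> over_unsolved G B \<longrightarrow> subst_evars \<sigma> B = X \<longrightarrow> \<sigma> a = Y
     \<longrightarrow> (\<exists>D \<sigma>'. instR G B a D \<and> extends_completion G \<sigma> P D \<sigma>' \<and> untouched G (insert a (fev B)) D))"

lemma inst_complete_atom:
  assumes "X = TUnit \<or> X = TVar c"
  shows "instL_complete P X X" "instR_complete P X X"
proof -
  have "\<exists>D. instL G a B D \<and> instR G B a D \<and> extends_completion G \<sigma> P D \<sigma> \<and> untouched G (insert a (fev B)) D"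
    if "completion G \<sigma> P" "CEVar a \<in> set G" "a \<notin> fev B" "over_unsolved G B" "\<sigma> a = X"
      "subst_evars \<sigma> B = X" for G \<sigma> a B
    using inst_atom[OF that(1-4)] that(5,6) assms by auto
  then show "instL_complete P X X" "instR_complete P X X"
    unfolding instL_complete_def instR_complete_def by blast+
qed

lemma inst_evar_mono_eq:
  assumes G: "completion G \<sigma> P" "CEVar a \<in> set G" and e: "a \<notin> fev (EVar e)" "over_unsolved G (EVar e)"
    and d: "decl_sub P (\<sigma> a) (\<sigma> e) \<or> decl_sub P (\<sigma> e) (\<sigma> a)"
  shows "\<exists>D. instL G a (EVar e) D \<and> instR G (EVar e) a D \<and> extends_completion G \<sigma> P D \<sigma>
    \<and> untouched G (insert a (fev (EVar e))) D"
proof -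
  have "CEVar e \<in> set G" "e \<noteq> a"
    using e unfolding over_unsolved_def by auto
  moreover have "\<sigma> e = \<sigma> a"
    using d decl_sub_mono_eq completion_unsolved_mono[OF G(1)] G(2) \<open>CEVar e \<in> set G\<close> by metis
  ultimately show ?thesis
    using inst_reach[OF G] by auto
qed

lemma inst_Arr_articulate:
  assumes G: "completion G \<sigma> P" "CEVar a \<in> set G" and B: "a \<notin> fev (Arr C1 C2)" "over_unsolved G (Arr C1 C2)"
    and a: "\<sigma> a = Arr t1 t2"
  obtains G0 G1 a1 a2 G' \<sigma>' where "G = G0 @ [CEVar a] @ G1"
    "G' = G0 @ [CEVar a2, CEVar a1, CSolved a (Arr (EVar a1) (EVar a2))] @ G1"
    "a1 \<notin> edom G \<union> mdom G \<union> fev (Arr C1 C2)" "a2 \<notin> edom G \<union> mdom G \<union> fev (Arr C1 C2)" "a1 \<noteq> a2"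
    "extends_completion G \<sigma> P G' \<sigma>'" "untouched G {a} G'"
    "CEVar a1 \<in> set G'" "CEVar a2 \<in> set G'" "over_unsolved G' C1" "over_unsolved G' C2"
    "\<sigma>' a1 = t1" "\<sigma>' a2 = t2" "subst_evars \<sigma>' C1 = subst_evars \<sigma> C1" "subst_evars \<sigma>' C2 = subst_evars \<sigma> C2"
proof -
  obtain G0 G1 where G0: "G = G0 @ CEVar a # G1"
    using G(2) by (meson split_list)
  obtain a1 where a1: "a1 \<notin> edom G \<union> mdom G \<union> fev (Arr C1 C2)"
    using ex_fresh_nat by (meson finite_UnI finite_edom finite_fev finite_mdom)
  obtain a2 where a2: "a2 \<notin> edom G \<union> mdom G \<union> fev (Arr C1 C2) \<union> {a1}"
    using ex_fresh_nat by (meson finite_UnI finite_edom finite_fev finite_mdom finite.emptyI finite_insert)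
  define G' where "G' = G0 @ [CEVar a2, CEVar a1, CSolved a (Arr (EVar a1) (EVar a2))] @ G1"
  have G': "extends_completion G \<sigma> P G' (\<sigma>(a1 := t1, a2 := t2))" "untouched G {a} G'"
    unfolding G'_def using articulate_evar[OF G(1) G0 a, of a1 a2] a1 a2 by auto
  moreover have "over_unsolved G' C1" "over_unsolved G' C2"
    using over_unsolved_if_untouched[OF G'(2) B(2)] B(1) unfolding over_unsolved_def by auto
  moreover have "subst_evars (\<sigma>(a1 := t1, a2 := t2)) C = subst_evars \<sigma> C" if "fev C \<subseteq> fev (Arr C1 C2)" for C
    using that a1 a2 by (intro subst_evars_cong) auto
  ultimately show ?thesis
    using that[of G0 G1 G' a2 a1 "\<sigma>(a1 := t1, a2 := t2)"] G0 a1 a2 unfolding G'_def by auto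
qed

lemma inst_Arr_second_premise:
  assumes T: "extends_completion G' \<sigma>' P T \<sigma>T" "untouched G' (insert a1 (fev C1)) T"
    and G': "completion G' \<sigma>' P" "CEVar a2 \<in> set G'" "over_unsolved G' C2"
    and a2: "a2 \<noteq> a1" "a2 \<notin> fev C1" "a2 \<notin> fev C2"
  shows "CEVar a2 \<in> set T" "a2 \<notin> fev (applyc T C2)" "over_unsolved T (applyc T C2)"
    "\<sigma>T a2 = \<sigma>' a2" "subst_evars \<sigma>T (applyc T C2) = subst_evars \<sigma>' C2"
proof -
  have ok': "completes_from {} {} \<sigma>' G'" and okT: "completes_from {} {} \<sigma>T T"
    and ext: "evar_extends G' T" and inst: "same_instance G' \<sigma>' T \<sigma>T"
    using G'(1) T(1) unfolding extends_completion_def completion_def by auto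
  show a2T: "CEVar a2 \<in> set T" "a2 \<notin> fev (applyc T C2)"
    using T(2) G'(2,3) a2 unfolding untouched_def by auto
  show "over_unsolved T (applyc T C2)"
    using over_unsolved_applyc[OF okT] fev_over_unsolved[OF G'(3)] evar_extends_edom[OF ext] by blast
  have "subst_evars \<sigma>T (applyc T (EVar a2)) = subst_evars \<sigma>' (applyc G' (EVar a2))"
    using inst G'(2) CEVar_in_edom unfolding same_instance_def by auto
  then show "\<sigma>T a2 = \<sigma>' a2"
    using applyc_unsolved[OF okT a2T(1)] applyc_unsolved[OF ok' G'(2)] by simp
  have "subst_evars \<sigma>T (applyc T C2) = subst_evars \<sigma>' (applyc G' C2)"
    using inst fev_over_unsolved[OF G'(3)] unfolding same_instance_def by auto
  then show "subst_evars \<sigma>T (applyc T C2) = subst_evars \<sigma>' C2"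
    using applyc_over_unsolved[OF ok' G'(3)] by simp
qed

lemma inst_Arr_compose:
  assumes G': "extends_completion G \<sigma> P G' \<sigma>'" "untouched G {a} G'"
    and T: "extends_completion G' \<sigma>' P T \<sigma>T" "untouched G' (insert a1 (fev C1)) T"
    and D: "extends_completion T \<sigma>T P D \<sigma>D" "untouched T (insert a2 (fev (applyc T C2))) D"
    and fresh: "a1 \<notin> edom G" "a2 \<notin> edom G" and C2: "over_unsolved G' C2"
  shows "extends_completion G \<sigma> P D \<sigma>D \<and> untouched G (insert a (fev (Arr C1 C2))) D"
proof
  show "extends_completion G \<sigma> P D \<sigma>D"
    using G'(1) T(1) D(1) extends_completion_trans by blast
  have ok: "completes_from {} {} \<sigma>' G'" "completes_from {} {} \<sigma>T T" "completes_from {} {} \<sigma>D D"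
    and ext: "evar_extends G G'" "evar_extends G' T" "evar_extends T D"
    using G'(1) T(1) D(1) unfolding extends_completion_def completion_def by auto
  have "untouched G ({a} \<union> insert a1 (fev C1)) T"
    by (rule untouched_trans[OF ok(1) ok(2) ext(1) ext(2) G'(2) T(2)])
  then have "untouched G (({a} \<union> insert a1 (fev C1)) \<union> insert a2 (fev (applyc T C2))) D"
    by (rule untouched_trans[OF ok(2) ok(3) evar_extends_trans[OF ext(1,2)] ext(3) _ D(2)])
  then show "untouched G (insert a (fev (Arr C1 C2))) D"
  proof (rule untouched_mono)
    fix e assume e: "CEVar e \<in> set G" "e \<in> ({a} \<union> insert a1 (fev C1)) \<union> insert a2 (fev (applyc T C2))"
    have "e \<noteq> a1" "e \<noteq> a2"
      using e(1) fresh CEVar_in_edom by blast+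
    moreover have "e \<in> fev C2" if "e \<in> fev (applyc T C2)" "e \<noteq> a" "e \<notin> fev C1"
      using that e(1) \<open>e \<noteq> a1\<close> G'(2) T(2) C2 unfolding untouched_def by blast
    ultimately show "e \<in> insert a (fev (Arr C1 C2))"
      using e(2) by auto
  qed
qed

lemma instL_complete_Arr:
  assumes IH1: "instR_complete P B1 A1" and IH2: "instL_complete P A2 B2"
    and d: "decl_sub P (Arr A1 A2) (Arr B1 B2)"
  shows "instL_complete P (Arr A1 A2) (Arr B1 B2)"
  unfolding instL_complete_def
proof (intro allI impI)
  fix G \<sigma> a B
  assume G: "completion G \<sigma> P" "CEVar a \<in> set G" and B: "a \<notin> fev B" "over_unsolved G B"
    and a: "\<sigma> a = Arr A1 A2" and B': "subst_evars \<sigma> B = Arr B1 B2"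
  show "\<exists>D \<sigma>'. instL G a B D \<and> extends_completion G \<sigma> P D \<sigma>' \<and> untouched G (insert a (fev B)) D"
  proof (cases "\<exists>e. B = EVar e")
    case True
    with G B a B' d inst_evar_mono_eq[OF G] show ?thesis by fastforce
  next
    case False
    then obtain C1 C2 where C: "B = Arr C1 C2" "subst_evars \<sigma> C1 = B1" "subst_evars \<sigma> C2 = B2"
      using subst_evars_eq_Arr[OF B'] by blast
    obtain G0 G1 a1 a2 G' \<sigma>' where G0: "G = G0 @ [CEVar a] @ G1"
      and G'_def: "G' = G0 @ [CEVar a2, CEVar a1, CSolved a (Arr (EVar a1) (EVar a2))] @ G1"
      and fresh: "a1 \<notin> edom G \<union> mdom G \<union> fev (Arr C1 C2)" "a2 \<notin> edom G \<union> mdom G \<union> fev (Arr C1 C2)"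
        "a1 \<noteq> a2"
      and G': "extends_completion G \<sigma> P G' \<sigma>'" "untouched G {a} G'"
      and a12: "CEVar a1 \<in> set G'" "CEVar a2 \<in> set G'" and C': "over_unsolved G' C1" "over_unsolved G' C2"
      and \<sigma>': "\<sigma>' a1 = A1" "\<sigma>' a2 = A2" "subst_evars \<sigma>' C1 = subst_evars \<sigma> C1"
        "subst_evars \<sigma>' C2 = subst_evars \<sigma> C2"
      by (rule inst_Arr_articulate[OF G B[unfolded C(1)] a])
    have cG': "completion G' \<sigma>' P"
      using G'(1) unfolding extends_completion_def by blast
    obtain T \<sigma>T where T: "instR G' C1 a1 T" "extends_completion G' \<sigma>' P T \<sigma>T"
      "untouched G' (insert a1 (fev C1)) T"
      using IH1[unfolded instR_complete_def, rule_format, OF cG' a12(1) _ C'(1)] \<sigma>'(1,3) C(2) fresh by auto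
    have a2: "a2 \<noteq> a1" "a2 \<notin> fev C1" "a2 \<notin> fev C2"
      using fresh by auto
    note second = inst_Arr_second_premise[OF T(2,3) cG' a12(2) C'(2) a2]
    have cT: "completion T \<sigma>T P"
      using T(2) unfolding extends_completion_def by blast
    obtain D \<sigma>D where D: "instL T a2 (applyc T C2) D" "extends_completion T \<sigma>T P D \<sigma>D"
      "untouched T (insert a2 (fev (applyc T C2))) D"
      using IH2[unfolded instL_complete_def, rule_format, OF cT second(1-3)] second(4,5) \<sigma>'(2,4) C(3) by auto
    have "instL G a (Arr C1 C2) D"
      using instLArr[OF G0 fresh] T(1) D(1) G'_def by blast
    moreover have "extends_completion G \<sigma> P D \<sigma>D \<and> untouched G (insert a (fev (Arr C1 C2))) D"
      using inst_Arr_compose[OF G' T(2,3) D(2,3)] fresh C'(2) by blast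
    ultimately show ?thesis
      using C(1) by blast
  qed
qed

lemma instR_complete_Arr:
  assumes IH1: "instL_complete P B1 A1" and IH2: "instR_complete P A2 B2"
    and d: "decl_sub P (Arr A1 A2) (Arr B1 B2)"
  shows "instR_complete P (Arr A1 A2) (Arr B1 B2)"
  unfolding instR_complete_def
proof (intro allI impI)
  fix G \<sigma> a B
  assume G: "completion G \<sigma> P" "CEVar a \<in> set G" and B: "a \<notin> fev B" "over_unsolved G B"
    and B': "subst_evars \<sigma> B = Arr A1 A2" and a: "\<sigma> a = Arr B1 B2"
  show "\<exists>D \<sigma>'. instR G B a D \<and> extends_completion G \<sigma> P D \<sigma>' \<and> untouched G (insert a (fev B)) D"
  proof (cases "\<exists>e. B = EVar e")
    case True
    with G B a B' d inst_evar_mono_eq[OF G] show ?thesis by fastforce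
  next
    case False
    then obtain C1 C2 where C: "B = Arr C1 C2" "subst_evars \<sigma> C1 = A1" "subst_evars \<sigma> C2 = A2"
      using subst_evars_eq_Arr[OF B'] by blast
    obtain G0 G1 a1 a2 G' \<sigma>' where G0: "G = G0 @ [CEVar a] @ G1"
      and G'_def: "G' = G0 @ [CEVar a2, CEVar a1, CSolved a (Arr (EVar a1) (EVar a2))] @ G1"
      and fresh: "a1 \<notin> edom G \<union> mdom G \<union> fev (Arr C1 C2)" "a2 \<notin> edom G \<union> mdom G \<union> fev (Arr C1 C2)"
        "a1 \<noteq> a2"
      and G': "extends_completion G \<sigma> P G' \<sigma>'" "untouched G {a} G'"
      and a12: "CEVar a1 \<in> set G'" "CEVar a2 \<in> set G'" and C': "over_unsolved G' C1" "over_unsolved G' C2"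
      and \<sigma>': "\<sigma>' a1 = B1" "\<sigma>' a2 = B2" "subst_evars \<sigma>' C1 = subst_evars \<sigma> C1"
        "subst_evars \<sigma>' C2 = subst_evars \<sigma> C2"
      by (rule inst_Arr_articulate[OF G B[unfolded C(1)] a])
    have cG': "completion G' \<sigma>' P"
      using G'(1) unfolding extends_completion_def by blast
    obtain T \<sigma>T where T: "instL G' a1 C1 T" "extends_completion G' \<sigma>' P T \<sigma>T"
      "untouched G' (insert a1 (fev C1)) T"
      using IH1[unfolded instL_complete_def, rule_format, OF cG' a12(1) _ C'(1)] \<sigma>'(1,3) C(2) fresh by auto
    have a2: "a2 \<noteq> a1" "a2 \<notin> fev C1" "a2 \<notin> fev C2"
      using fresh by auto
    note second = inst_Arr_second_premise[OF T(2,3) cG' a12(2) C'(2) a2]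
    have cT: "completion T \<sigma>T P"
      using T(2) unfolding extends_completion_def by blast
    obtain D \<sigma>D where D: "instR T (applyc T C2) a2 D" "extends_completion T \<sigma>T P D \<sigma>D"
      "untouched T (insert a2 (fev (applyc T C2))) D"
      using IH2[unfolded instR_complete_def, rule_format, OF cT second(1-3)] second(4,5) \<sigma>'(2,4) C(3) by auto
    have "instR G (Arr C1 C2) a D"
      using instRArr[OF G0 fresh] T(1) D(1) G'_def by blast
    moreover have "extends_completion G \<sigma> P D \<sigma>D \<and> untouched G (insert a (fev (Arr C1 C2))) D"
      using inst_Arr_compose[OF G' T(2,3) D(2,3)] fresh C'(2) by blast
    ultimately show ?thesis
      using C(1) by blast
  qed
qed

lemma instL_complete_All_left: "instL_complete P (All A) B"
  unfolding instL_complete_def using completion_unsolved_mono by fastforce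

lemma instR_complete_All_right: "instR_complete P A (All B)"
  unfolding instR_complete_def using completion_unsolved_mono by fastforce

lemma instR_complete_All_left:
  assumes t: "mono t" "decl_typ t" "wft P t" and IH: "instR_complete P (open_typ A t) B"
  shows "instR_complete P (All A) B"
  unfolding instR_complete_def
proof (intro allI impI)
  fix G \<sigma> a B0
  assume G: "completion G \<sigma> P" "CEVar a \<in> set G" and B0: "a \<notin> fev B0" "over_unsolved G B0"
    "subst_evars \<sigma> B0 = All A" and a: "\<sigma> a = B"
  obtain B' where B': "B0 = All B'" "subst_evars \<sigma> B' = A"
    using over_unsolved_subst_evars_eq_All[OF G(1) B0(2,3)] .
  obtain b where b: "b \<notin> edom G \<union> mdom G \<union> fev B' \<union> {a}"
    using ex_fresh_nat by (meson finite_UnI finite_edom finite_fev finite_mdom finite.emptyI finite_insert)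
  define G' where "G' = G @ [CMarker b, CEVar b]"
  have cG': "completion G' (\<sigma>(b := t)) P"
    unfolding G'_def using completion_push_marker_evar[OF G(1) _ t] b by blast
  have B'_over: "over_unsolved G B'"
    using B0(2) B'(1) by (simp add: over_unsolved_def)
  have "over_unsolved G' (open_typ B' (EVar b))"
    unfolding G'_def by (rule over_unsolved_open_typ[OF over_unsolved_append[OF B'_over]]) (simp add: over_unsolved_def)
  moreover have "a \<notin> fev (open_typ B' (EVar b))"
    using B0(1) B'(1) b fev_open_k unfolding open_typ_def by fastforce
  moreover have "subst_evars (\<sigma>(b := t)) (open_typ B' (EVar b)) = open_typ A t"
    using subst_evars_open_typ_EVar[OF G(1) B'_over] B'(2) b by auto
  ultimately obtain D0 \<sigma>' where D0: "instR G' (open_typ B' (EVar b)) a D0"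
    "extends_completion G' (\<sigma>(b := t)) P D0 \<sigma>'" "untouched G' (insert a (fev (open_typ B' (EVar b)))) D0"
    using IH[unfolded instR_complete_def, rule_format, OF cG'] G(2) a b unfolding G'_def by fastforce
  obtain D H where D: "D0 = D @ [CMarker b] @ H" "edom H \<inter> edom G = {}" "extends_completion G \<sigma> P D \<sigma>'"
    using extends_completion_drop_marker_evar[OF D0(2)[unfolded G'_def] G(1)] b by blast
  have "instR G (All B') a D"
    using instRAllL[of a G b B' D H] G(2) b D0(1) D(1) unfolding G'_def open_typ_def by auto
  moreover have "untouched G (insert a (fev (open_typ B' (EVar b)))) D"
    using untouched_truncate[OF D0(3)[unfolded G'_def D(1)]] D(2) by auto
  then have "untouched G (insert a (fev B0)) D"
    by (rule untouched_mono) (use B'(1) b fev_open_k CEVar_in_edom in \<open>fastforce simp: open_typ_def\<close>)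
  ultimately show "\<exists>D \<sigma>'. instR G B0 a D \<and> extends_completion G \<sigma> P D \<sigma>' \<and> untouched G (insert a (fev B0)) D"
    using B'(1) D(3) by blast
qed

lemma instL_complete_All_right:
  assumes b: "b \<notin> tdom P" "b \<notin> ftv B" and IH: "instL_complete (P @ [CTVar b]) A (open_typ B (TVar b))"
  shows "instL_complete P A (All B)"
  unfolding instL_complete_def
proof (intro allI impI)
  fix G \<sigma> a B0
  assume G: "completion G \<sigma> P" "CEVar a \<in> set G" and B0: "a \<notin> fev B0" "over_unsolved G B0"
    and a: "\<sigma> a = A" and B0': "subst_evars \<sigma> B0 = All B"
  obtain B' where B': "B0 = All B'" "subst_evars \<sigma> B' = B"
    using over_unsolved_subst_evars_eq_All[OF G(1) B0(2) B0'] .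
  define G' where "G' = G @ [CTVar b]"
  have cG': "completion G' \<sigma> (P @ [CTVar b])"
    unfolding G'_def by (rule completion_push_tvar[OF G(1)])
  have B'_over: "over_unsolved G B'"
    using B0(2) B'(1) by (simp add: over_unsolved_def)
  have "over_unsolved G' (open_typ B' (TVar b))"
    unfolding G'_def by (rule over_unsolved_open_typ[OF over_unsolved_append[OF B'_over]]) (simp add: over_unsolved_def)
  moreover have "a \<notin> fev (open_typ B' (TVar b))"
    using B0(1) B'(1) fev_open_k unfolding open_typ_def by fastforce
  moreover have "subst_evars \<sigma> (open_typ B' (TVar b)) = open_typ B (TVar b)"
    using subst_evars_open_typ[OF G(1) B'_over] B'(2) by simp
  ultimately obtain D0 \<sigma>' where D0: "instL G' a (open_typ B' (TVar b)) D0"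
    "extends_completion G' \<sigma> (P @ [CTVar b]) D0 \<sigma>'" "untouched G' (insert a (fev (open_typ B' (TVar b)))) D0"
    using IH[unfolded instL_complete_def, rule_format, OF cG'] G(2) a unfolding G'_def by fastforce
  obtain D where D: "D0 = D @ [CTVar b]" "extends_completion G \<sigma> P D \<sigma>'"
    using extends_completion_drop_tvar[OF D0(2)[unfolded G'_def] G(1)] by blast
  have "b \<notin> tdom G" "b \<notin> ftv B'"
    using b G(1) ftv_subst_evars[of B' \<sigma>] B'(2) unfolding completion_def by auto
  then have "instL G a (All B') D"
    using instLAllR[of a G b B' D "[]"] G(2) D0(1) D(1) unfolding G'_def open_typ_def by auto
  moreover have "untouched G (insert a (fev (open_typ B' (TVar b)))) D"
    using untouched_truncate[OF D0(3)[unfolded G'_def D(1)]] by simp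
  then have "untouched G (insert a (fev B0)) D"
    by (rule untouched_mono) (use B'(1) fev_open_k in \<open>fastforce simp: open_typ_def\<close>)
  ultimately show "\<exists>D \<sigma>'. instL G a B0 D \<and> extends_completion G \<sigma> P D \<sigma>' \<and> untouched G (insert a (fev B0)) D"
    using B'(1) D(2) by blast
qed

lemma inst_complete:
  "decl_sub P X Y \<Longrightarrow> instL_complete P X Y \<and> instR_complete P X Y"
proof (induction rule: decl_sub.induct)
  case (dsub_var a P)
  then show ?case using inst_complete_atom by blast
next
  case (dsub_unit P)
  then show ?case using inst_complete_atom by blast
next
  case (dsub_arr P B1 A1 A2 B2)
  then show ?case
    using instL_complete_Arr instR_complete_Arr decl_sub.dsub_arr by blast
next
  case (dsub_allL t P A B)
  then show ?case
    using instL_complete_All_left instR_complete_All_left by blast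
next
  case (dsub_allR b P A B)
  then show ?case
    using instL_complete_All_right instR_complete_All_right by blast
qed

section \<open>Completeness of subtyping\<close>

definition sub_complete :: "ctx \<Rightarrow> ty \<Rightarrow> ty \<Rightarrow> bool" where
  "sub_complete P X Y \<longleftrightarrow> (\<forall>G \<sigma> A B. completion G \<sigma> P \<longrightarrow> over_unsolved G A \<longrightarrow> over_unsolved G B
     \<longrightarrow> subst_evars \<sigma> A = X \<longrightarrow> subst_evars \<sigma> B = Y
     \<longrightarrow> (\<exists>D \<sigma>'. alg_sub G A B D \<and> extends_completion G \<sigma> P D \<sigma>'))"

lemma alg_sub_evar_left_complete:
  assumes G: "completion G \<sigma> P" and e: "CEVar e \<in> set G" and B: "over_unsolved G B"
    and d: "decl_sub P (\<sigma> e) (subst_evars \<sigma> B)" and occ: "B = EVar e \<or> e \<notin> fev B"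
  shows "\<exists>D \<sigma>'. alg_sub G (EVar e) B D \<and> extends_completion G \<sigma> P D \<sigma>'"
proof (cases "B = EVar e")
  case True
  then show ?thesis
    using asub_evar[OF e] extends_completion_refl[OF G] by blast
next
  case False
  with occ have "e \<notin> fev B" by blast
  then show ?thesis
    using inst_complete[OF d] G e B asub_instL[OF e] unfolding instL_complete_def by blast
qed

lemma alg_sub_evar_right_complete:
  assumes G: "completion G \<sigma> P" and e: "CEVar e \<in> set G" and A: "over_unsolved G A"
    and d: "decl_sub P (subst_evars \<sigma> A) (\<sigma> e)" and occ: "e \<notin> fev A"
  shows "\<exists>D \<sigma>'. alg_sub G A (EVar e) D \<and> extends_completion G \<sigma> P D \<sigma>'"
  using inst_complete[OF d] G e A occ asub_instR[OF e occ] unfolding instR_complete_def by blast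

lemma sub_complete_atom:
  assumes X: "X = TUnit \<or> X = TVar c" and d: "decl_sub P X X"
    and refl: "\<And>G \<sigma>. completion G \<sigma> P \<Longrightarrow> alg_sub G X X G"
  shows "sub_complete P X X"
  unfolding sub_complete_def
proof (intro allI impI)
  fix G \<sigma> A B
  assume G: "completion G \<sigma> P" and AB: "over_unsolved G A" "over_unsolved G B"
    and A: "subst_evars \<sigma> A = X" and B: "subst_evars \<sigma> B = X"
  have shape: "Z = X \<or> (\<exists>e. Z = EVar e)" if "subst_evars \<sigma> Z = X" for Z
    using that X by (cases Z) auto
  show "\<exists>D \<sigma>'. alg_sub G A B D \<and> extends_completion G \<sigma> P D \<sigma>'"
  proof (cases "\<exists>e. A = EVar e")
    case True
    then obtain e where e: "A = EVar e" by blast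
    have "B = EVar e \<or> e \<notin> fev B"
      using shape[OF B] X by auto
    then show ?thesis
      using alg_sub_evar_left_complete[OF G _ AB(2)] AB(1) d A B e unfolding over_unsolved_def by auto
  next
    case False
    then have "A = X" using shape[OF A] by blast
    show ?thesis
    proof (cases "B = X")
      case True
      with \<open>A = X\<close> show ?thesis
        using refl[OF G] extends_completion_refl[OF G] by blast
    next
      case False
      then obtain e where "B = EVar e" using shape[OF B] by blast
      then show ?thesis
        using alg_sub_evar_right_complete[OF G _ AB(1)] AB(2) d A B \<open>A = X\<close> X
        unfolding over_unsolved_def by auto
    qed
  qed
qed

lemma alg_sub_Arr_Arr_complete:
  assumes IH1: "sub_complete P B1 A1" and IH2: "sub_complete P A2 B2"
    and G: "completion G \<sigma> P" and over: "over_unsolved G (Arr A1' A2')" "over_unsolved G (Arr B1' B2')"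
    and A: "subst_evars \<sigma> A1' = A1" "subst_evars \<sigma> A2' = A2"
    and B: "subst_evars \<sigma> B1' = B1" "subst_evars \<sigma> B2' = B2"
  shows "\<exists>D \<sigma>'. alg_sub G (Arr A1' A2') (Arr B1' B2') D \<and> extends_completion G \<sigma> P D \<sigma>'"
proof -
  have ok: "completes_from {} {} \<sigma> G"
    using G unfolding completion_def by simp
  have over': "over_unsolved G A1'" "over_unsolved G A2'" "over_unsolved G B1'" "over_unsolved G B2'"
    using over unfolding over_unsolved_def by auto
  obtain T \<sigma>T where T: "alg_sub G B1' A1' T" "extends_completion G \<sigma> P T \<sigma>T"
    using IH1[unfolded sub_complete_def, rule_format, OF G over'(3,1) B(1) A(1)] by blast
  have cT: "completion T \<sigma>T P" and okT: "completes_from {} {} \<sigma>T T" and ext: "evar_extends G T"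
    and inst: "same_instance G \<sigma> T \<sigma>T"
    using T(2) unfolding extends_completion_def completion_def by auto
  have "over_unsolved T (applyc T Z)" "subst_evars \<sigma>T (applyc T Z) = subst_evars \<sigma> Z"
    if "over_unsolved G Z" for Z
  proof -
    show "over_unsolved T (applyc T Z)"
      using over_unsolved_applyc[OF okT] fev_over_unsolved[OF that] evar_extends_edom[OF ext] by blast
    have "subst_evars \<sigma>T (applyc T Z) = subst_evars \<sigma> (applyc G Z)"
      using inst fev_over_unsolved[OF that] unfolding same_instance_def by blast
    then show "subst_evars \<sigma>T (applyc T Z) = subst_evars \<sigma> Z"
      using applyc_over_unsolved[OF ok that] by simp
  qed
  then obtain D \<sigma>D where D: "alg_sub T (applyc T A2') (applyc T B2') D" "extends_completion T \<sigma>T P D \<sigma>D"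
    using IH2[unfolded sub_complete_def, rule_format, OF cT] over'(2,4) A(2) B(2) by metis
  then show ?thesis
    using asub_arr[OF T(1) D(1)] extends_completion_trans[OF T(2) D(2)] by blast
qed

lemma alg_sub_evar_Arr_complete:
  assumes G: "completion G \<sigma> P" and e: "over_unsolved G (EVar e)"
    and B: "over_unsolved G B" "subst_evars \<sigma> B = Arr B1 B2" and d: "decl_sub P (\<sigma> e) (Arr B1 B2)"
  shows "\<exists>D \<sigma>'. alg_sub G (EVar e) B D \<and> extends_completion G \<sigma> P D \<sigma>'"
proof (cases "B = EVar e \<or> e \<notin> fev B")
  case True
  with G e B d show ?thesis
    using alg_sub_evar_left_complete unfolding over_unsolved_def by auto
next
  case False
  then obtain C1 C2 where "B = Arr C1 C2" "subst_evars \<sigma> C1 = B1" "subst_evars \<sigma> C2 = B2"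
    using subst_evars_eq_Arr[OF B(2)] by auto
  with False have "subterm (\<sigma> e) B1 \<or> subterm (\<sigma> e) B2"
    using subterm_subst_evars[of e _ \<sigma>] by auto
  moreover have "mono (\<sigma> e)"
    using G e completion_unsolved_mono unfolding over_unsolved_def by auto
  ultimately show ?thesis
    using mono_sub_Arr_not_subterm[OF d] by blast
qed

lemma alg_sub_Arr_evar_complete:
  assumes G: "completion G \<sigma> P" and A: "over_unsolved G (Arr A1' A2')"
    "subst_evars \<sigma> (Arr A1' A2') = Arr A1 A2"
    and e: "over_unsolved G (EVar e)" and d: "decl_sub P (Arr A1 A2) (\<sigma> e)"
  shows "\<exists>D \<sigma>'. alg_sub G (Arr A1' A2') (EVar e) D \<and> extends_completion G \<sigma> P D \<sigma>'"
proof (cases "e \<in> fev (Arr A1' A2')")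
  case False
  with G A e d show ?thesis
    using alg_sub_evar_right_complete unfolding over_unsolved_def by auto
next
  case True
  with A(2) have "subterm (\<sigma> e) A1 \<or> subterm (\<sigma> e) A2"
    using subterm_subst_evars[of e _ \<sigma>] by auto
  moreover have "mono (\<sigma> e)"
    using G e completion_unsolved_mono unfolding over_unsolved_def by auto
  ultimately show ?thesis
    using Arr_sub_mono_not_subterm[OF d] by blast
qed

lemma sub_complete_Arr:
  assumes IH1: "sub_complete P B1 A1" and IH2: "sub_complete P A2 B2"
    and d: "decl_sub P (Arr A1 A2) (Arr B1 B2)"
  shows "sub_complete P (Arr A1 A2) (Arr B1 B2)"
  unfolding sub_complete_def
proof (intro allI impI)
  fix G \<sigma> A B
  assume G: "completion G \<sigma> P" and over: "over_unsolved G A" "over_unsolved G B"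
    and A: "subst_evars \<sigma> A = Arr A1 A2" and B: "subst_evars \<sigma> B = Arr B1 B2"
  show "\<exists>D \<sigma>'. alg_sub G A B D \<and> extends_completion G \<sigma> P D \<sigma>'"
  proof (cases A)
    case (EVar e)
    with alg_sub_evar_Arr_complete[OF G _ over(2) B] over(1) A d show ?thesis by auto
  next
    case (Arr A1' A2')
    show ?thesis
    proof (cases B)
      case (EVar e)
      with alg_sub_Arr_evar_complete[OF G] over A B d Arr show ?thesis by auto
    next
      case (Arr B1' B2')
      with alg_sub_Arr_Arr_complete[OF IH1 IH2 G] over A B \<open>A = Arr A1' A2'\<close> show ?thesis by auto
    qed (use B in auto)
  qed (use A in auto)
qed

lemma sub_complete_All_left:
  assumes t: "mono t" "decl_typ t" "wft P t" and IH: "sub_complete P (open_typ A t) B"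
  shows "sub_complete P (All A) B"
  unfolding sub_complete_def
proof (intro allI impI)
  fix G \<sigma> A0 B0
  assume G: "completion G \<sigma> P" and over: "over_unsolved G A0" "over_unsolved G B0"
    and A0: "subst_evars \<sigma> A0 = All A" and B0: "subst_evars \<sigma> B0 = B"
  obtain A' where A': "A0 = All A'" "subst_evars \<sigma> A' = A"
    using over_unsolved_subst_evars_eq_All[OF G over(1) A0] .
  obtain a where a: "a \<notin> edom G \<union> mdom G \<union> fev A' \<union> fev B0"
    using ex_fresh_nat by (meson finite_UnI finite_edom finite_fev finite_mdom)
  define G' where "G' = G @ [CMarker a, CEVar a]"
  have cG': "completion G' (\<sigma>(a := t)) P"
    unfolding G'_def using completion_push_marker_evar[OF G(1) _ t] a by blast
  have A'_over: "over_unsolved G A'"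
    using over(1) A'(1) by (simp add: over_unsolved_def)
  have "over_unsolved G' (open_typ A' (EVar a))"
    unfolding G'_def by (rule over_unsolved_open_typ[OF over_unsolved_append[OF A'_over]]) (simp add: over_unsolved_def)
  moreover have "over_unsolved G' B0"
    unfolding G'_def by (rule over_unsolved_append[OF over(2)])
  moreover have "subst_evars (\<sigma>(a := t)) (open_typ A' (EVar a)) = open_typ A t"
    using subst_evars_open_typ_EVar[OF G A'_over] A'(2) a by auto
  moreover have "subst_evars (\<sigma>(a := t)) B0 = B"
    using B0 a subst_evars_fun_upd_triv by auto
  ultimately obtain D0 \<sigma>' where D0: "alg_sub G' (open_typ A' (EVar a)) B0 D0"
    "extends_completion G' (\<sigma>(a := t)) P D0 \<sigma>'"
    using IH[unfolded sub_complete_def, rule_format, OF cG'] by blast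
  obtain D H where D: "D0 = D @ [CMarker a] @ H" "extends_completion G \<sigma> P D \<sigma>'"
    using extends_completion_drop_marker_evar[OF D0(2)[unfolded G'_def] G] a by blast
  have "alg_sub G (All A') B0 D"
    using asub_allL[of a G A' B0 D H] a D0(1) D(1) unfolding G'_def open_typ_def by auto
  with A'(1) D(2) show "\<exists>D \<sigma>'. alg_sub G A0 B0 D \<and> extends_completion G \<sigma> P D \<sigma>'"
    by blast
qed

lemma sub_complete_All_right:
  assumes b: "b \<notin> tdom P" "b \<notin> ftv A" "b \<notin> ftv B"
    and IH: "sub_complete (P @ [CTVar b]) A (open_typ B (TVar b))"
  shows "sub_complete P A (All B)"
  unfolding sub_complete_def
proof (intro allI impI)
  fix G \<sigma> A0 B0
  assume G: "completion G \<sigma> P" and over: "over_unsolved G A0" "over_unsolved G B0"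
    and A0: "subst_evars \<sigma> A0 = A" and B0: "subst_evars \<sigma> B0 = All B"
  obtain B' where B': "B0 = All B'" "subst_evars \<sigma> B' = B"
    using over_unsolved_subst_evars_eq_All[OF G over(2) B0] .
  define G' where "G' = G @ [CTVar b]"
  have cG': "completion G' \<sigma> (P @ [CTVar b])"
    unfolding G'_def by (rule completion_push_tvar[OF G])
  have B'_over: "over_unsolved G B'"
    using over(2) B'(1) by (simp add: over_unsolved_def)
  have "over_unsolved G' (open_typ B' (TVar b))"
    unfolding G'_def by (rule over_unsolved_open_typ[OF over_unsolved_append[OF B'_over]]) (simp add: over_unsolved_def)
  moreover have "over_unsolved G' A0"
    unfolding G'_def by (rule over_unsolved_append[OF over(1)])
  moreover have "subst_evars \<sigma> (open_typ B' (TVar b)) = open_typ B (TVar b)"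
    using subst_evars_open_typ[OF G B'_over] B'(2) by simp
  ultimately obtain D0 \<sigma>' where D0: "alg_sub G' A0 (open_typ B' (TVar b)) D0"
    "extends_completion G' \<sigma> (P @ [CTVar b]) D0 \<sigma>'"
    using IH[unfolded sub_complete_def, rule_format, OF cG'] A0 by blast
  obtain D where D: "D0 = D @ [CTVar b]" "extends_completion G \<sigma> P D \<sigma>'"
    using extends_completion_drop_tvar[OF D0(2)[unfolded G'_def] G] by blast
  have "b \<notin> tdom G \<union> ftv A0 \<union> ftv B'"
    using b G ftv_subst_evars[of A0 \<sigma>] ftv_subst_evars[of B' \<sigma>] A0 B'(2)
    unfolding completion_def by auto
  then have "alg_sub G A0 (All B') D"
    using asub_allR[of b G A0 B' D "[]"] D0(1) D(1) unfolding G'_def open_typ_def by auto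
  with B'(1) D(2) show "\<exists>D \<sigma>'. alg_sub G A0 B0 D \<and> extends_completion G \<sigma> P D \<sigma>'"
    by blast
qed

lemma sub_complete:
  "decl_sub P X Y \<Longrightarrow> sub_complete P X Y"
proof (induction rule: decl_sub.induct)
  case (dsub_var a P)
  have "alg_sub G (TVar a) (TVar a) G" if "completion G \<sigma> P" for G \<sigma>
    using that dsub_var CTVar_in_set_if_tdom asub_var unfolding completion_def by metis
  then show ?case
    using sub_complete_atom decl_sub.dsub_var[OF dsub_var] by blast
next
  case (dsub_unit P)
  then show ?case
    using sub_complete_atom decl_sub.dsub_unit asub_unit by blast
next
  case (dsub_arr P B1 A1 A2 B2)
  then show ?case
    using sub_complete_Arr decl_sub.dsub_arr by blast
next
  case (dsub_allL t P A B)
  then show ?case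
    using sub_complete_All_left by blast
next
  case (dsub_allR b P A B)
  then show ?case
    using sub_complete_All_right by blast
qed

theorem mainTheorem8:
  assumes "wf_ctx P" and "decl_ctx P"
    and "decl_typ A" and "decl_typ B"
    and "decl_sub P A B"
  shows "\<exists>D. alg_sub P A B D"
proof -
  have "completion P EVar P"
    using completion_if_decl_ctx[OF assms(2)] .
  moreover have "over_unsolved P A" "over_unsolved P B"
    using assms(3,4) unfolding decl_typ_def over_unsolved_def by auto
  ultimately have "\<exists>D \<sigma>'. alg_sub P A B D \<and> extends_completion P EVar P D \<sigma>'"
    using sub_complete[OF assms(5)] unfolding sub_complete_def by (metis subst_evars_EVar)
  then show ?thesis
    by blast
qed

end
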